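(* Let $\mathbf{U}\subset\mathbb{C}$ be a closed interval, a closed square, a closed disk or a closed annulus, and let $U$ be, correspondingly, the open interval, open square, open disk or open annulus, so that $\mathbf{U}$ is the compact closure of $U$. Then the closure of $U^n$ in $\mathbb{C}^n$ is $\mathbf{U}^n$, the closure of $\mathrm{Mult}_n(U)$ in $\mathrm{Mult}_n(\mathbb{C})$ is $\mathrm{Mult}_n(\mathbf{U})$, and the closure of $\mathrm{Poly}_d^{mt}(U)$ in $\mathrm{Poly}_d^{mt}(\mathbb{C})$ is $\mathrm{Poly}_d^{mt}(\mathbf{U})$; all three closures are compact.
   Context: $n=d-1$. $\mathrm{Mult}_n(X)=X^n/\mathrm{Sym}_n$ is the space of $n$-element multisets in $X$. $\mathrm{Poly}_d^{mt}(X)$ is the space of monic degree-$d$ complex polynomials modulo precomposition with translations, all of whose critical values lie in $X$, topologized via coefficients of the centered representative. The open interval is the closed interval minus its endpoints. *)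

theory Defs
  imports "HOL-Analysis.Analysis" "HOL-Library.Multiset" "HOL-Computational_Algebra.Polynomial"
begin

definition closed_square :: "complex \<Rightarrow> complex \<Rightarrow> complex set" where
  "closed_square a w = {a + w * (complex_of_real s + \<i> * complex_of_real t) | s t.
      0 \<le> s \<and> s \<le> 1 \<and> 0 \<le> t \<and> t \<le> 1}"

definition open_square :: "complex \<Rightarrow> complex \<Rightarrow> complex set" where
  "open_square a w = {a + w * (complex_of_real s + \<i> * complex_of_real t) | s t.
      0 < s \<and> s < 1 \<and> 0 < t \<and> t < 1}"

definition closed_annulus :: "complex \<Rightarrow> real \<Rightarrow> real \<Rightarrow> complex set" where
  "closed_annulus c r1 r2 = {z. r1 \<le> cmod (z - c) \<and> cmod (z - c) \<le> r2}"

definition open_annulus :: "complex \<Rightarrow> real \<Rightarrow> real \<Rightarrow> complex set" where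
  "open_annulus c r1 r2 = {z. r1 < cmod (z - c) \<and> cmod (z - c) < r2}"

definition shape_pair :: "complex set \<Rightarrow> complex set \<Rightarrow> bool" where
  "shape_pair Ubar U \<longleftrightarrow>
     (\<exists>a b. a \<noteq> b \<and> Ubar = closed_segment a b \<and> U = open_segment a b) \<or>
     (\<exists>a w. w \<noteq> 0 \<and> Ubar = closed_square a w \<and> U = open_square a w) \<or>
     (\<exists>c r. 0 < r \<and> Ubar = cball c r \<and> U = ball c r) \<or>
     (\<exists>c r1 r2. 0 < r1 \<and> r1 < r2 \<and> Ubar = closed_annulus c r1 r2 \<and> U = open_annulus c r1 r2)"

text \<open>C^n as extensional functions on {..<n} with the product topology.\<close>
definition Cn_top :: "nat \<Rightarrow> (nat \<Rightarrow> complex) topology" where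
  "Cn_top n = product_topology (\<lambda>_. euclidean) {..<n}"

definition Mult :: "nat \<Rightarrow> complex set \<Rightarrow> complex multiset set" where
  "Mult n X = {M. size M = n \<and> set_mset M \<subseteq> X}"

definition mult_of :: "nat \<Rightarrow> (nat \<Rightarrow> complex) \<Rightarrow> complex multiset" where
  "mult_of n f = image_mset f (mset_set {..<n})"

definition quotient_top :: "'a topology \<Rightarrow> ('a \<Rightarrow> 'b) \<Rightarrow> 'b topology" where
  "quotient_top X f = topology (\<lambda>S. S \<subseteq> f ` topspace X \<and> openin X {x \<in> topspace X. f x \<in> S})"

lemma istopology_quotient_top:
  "istopology (\<lambda>S. S \<subseteq> f ` topspace X \<and> openin X {x \<in> topspace X. f x \<in> S})"
proof -
  have 1: "S \<inter> T \<subseteq> f ` topspace X \<and> openin X {x \<in> topspace X. f x \<in> S \<inter> T}"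
    if hS: "S \<subseteq> f ` topspace X \<and> openin X {x \<in> topspace X. f x \<in> S}"
    and hT: "T \<subseteq> f ` topspace X \<and> openin X {x \<in> topspace X. f x \<in> T}" for S T
  proof -
    have eq: "{x \<in> topspace X. f x \<in> S \<inter> T} = {x \<in> topspace X. f x \<in> S} \<inter> {x \<in> topspace X. f x \<in> T}" by auto
    have "openin X ({x \<in> topspace X. f x \<in> S} \<inter> {x \<in> topspace X. f x \<in> T})"
      using hS hT by (intro openin_Int) auto
    then show ?thesis using hS eq by auto
  qed
  have 2: "\<Union>K \<subseteq> f ` topspace X \<and> openin X {x \<in> topspace X. f x \<in> \<Union>K}"
    if K: "\<forall>S\<in>K. S \<subseteq> f ` topspace X \<and> openin X {x \<in> topspace X. f x \<in> S}" for K
  proof -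
    have "{x \<in> topspace X. f x \<in> \<Union>K} = (\<Union>S\<in>K. {x \<in> topspace X. f x \<in> S})" by auto
    then show ?thesis using K by auto
  qed
  show ?thesis unfolding istopology_def using 1 2 by blast
qed

definition Mult_top :: "nat \<Rightarrow> complex multiset topology" where
  "Mult_top n = quotient_top (Cn_top n) (mult_of n)"

text \<open>A class of monic degree-d polynomials modulo translation is represented by its
  unique centered representative (coefficient of z^(d-1) equal to 0).\<close>
definition centered_monic :: "nat \<Rightarrow> complex poly set" where
  "centered_monic d = {p. degree p = d \<and> lead_coeff p = 1 \<and> coeff p (d - 1) = 0}"

definition critical_values :: "complex poly \<Rightarrow> complex set" where
  "critical_values p = {poly p z | z. poly (pderiv p) z = 0}"

definition Poly_mt :: "nat \<Rightarrow> complex set \<Rightarrow> complex poly set" where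
  "Poly_mt d X = {p \<in> centered_monic d. critical_values p \<subseteq> X}"

text \<open>Topology via the free coefficients a_0, ..., a_(d-2) of the centered representative.\<close>
definition Poly_mt_top :: "nat \<Rightarrow> complex poly topology" where
  "Poly_mt_top d = pullback_topology (centered_monic d)
      (\<lambda>p. restrict (coeff p) {..<d - 1}) (Cn_top (d - 1))"

end

theory Submission
  imports Defs "HOL-Computational_Algebra.Fundamental_Theorem_Algebra"
begin

text \<open>
  For \<open>\<complex>\<^sup>n\<close> and \<open>Mult\<^sub>n\<close> the statement is formal: closures and compact sets pass
  through finite products and through the continuous quotient map \<open>\<complex>\<^sup>n \<rightarrow> Mult\<^sub>n(\<complex>)\<close>.

  Every critical value of \<open>p\<close> is approximated by critical
  values of all polynomials with nearby coefficients (a root of \<open>p'\<close> forces a nearby root of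
  \<open>q'\<close>), so \<open>Poly(K)\<close> is closed for closed \<open>K\<close>. It is also bounded for bounded \<open>K\<close>:
  rescaling \<open>p\<close> so that its largest weighted middle coefficient has modulus 1 lands in a
  compact set of polynomials whose critical values are uniformly spread apart, whereas the
  rescaled critical values of \<open>p\<close> shrink with the scale factor; the constant coefficient is
  then controlled by a critical value.

  Density of \<open>Poly(U)\<close> in \<open>Poly(K)\<close>: the interval, square and disk are contracted into their
  interiors by \<open>v \<mapsto> c + s (v - c)\<close>, and \<open>s p(s\<^bsup>-1/d\<^esup> z) + (1 - s) c\<close> moves the critical
  values of \<open>p\<close> in exactly this way. The annulus is not star-shaped; instead its points are
  pushed radially towards the middle circle by \<open>v \<mapsto> v + t \<delta>(v)\<close>, and \<open>p + t h\<close>, with \<open>h\<close>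
  interpolating \<open>\<delta> \<circ> p\<close> at the critical points of \<open>p\<close>, has critical values within \<open>o(t)\<close>
  of the pushed ones.
\<close>

lemma in_closure_if_tendsto:
  assumes "(f \<longlongrightarrow> l) F" "\<forall>\<^sub>F x in F. f x \<in> S" "F \<noteq> bot"
  shows "l \<in> closure S"
  using assms by (intro Lim_in_closed_set[OF closed_closure]) (auto elim: eventually_mono intro: closure_subset[THEN subsetD])

lemma in_closure_of_if_limitin:
  assumes "limitin X f l F" "\<forall>\<^sub>F x in F. f x \<in> S" "F \<noteq> bot"
  shows "l \<in> X closure_of S"
proof -
  have "\<forall>\<^sub>F x in F. f x \<in> topspace X"
    using assms(1) limitinD[OF assms(1) openin_topspace limitin_topspace] by blast
  with assms(2) have "\<forall>\<^sub>F x in F. f x \<in> X closure_of S"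
    by eventually_elim (simp add: closure_of_subset_Int[THEN subsetD])
  then show ?thesis
    using limitin_closedin[OF assms(1) closedin_closure_of] assms(3) by blast
qed

lemma openin_if_eventually_nhdsin:
  assumes "S \<subseteq> topspace X" "\<And>x. x \<in> S \<Longrightarrow> \<forall>\<^sub>F y in nhdsin X x. y \<in> S"
  shows "openin X S"
proof (subst openin_subopen, intro ballI)
  fix x assume "x \<in> S"
  then have "x \<notin> topspace X \<or> (\<exists>T. openin X T \<and> x \<in> T \<and> (\<forall>y\<in>T. y \<in> S))"
    using assms(2) unfolding eventually_nhdsin by blast
  then show "\<exists>T. openin X T \<and> x \<in> T \<and> T \<subseteq> S"
    using assms(1) \<open>x \<in> S\<close> by blast
qed

lemma eventually_mult_less_at_right_0: "0 < A \<Longrightarrow> \<forall>\<^sub>F x in at_right (0::real). x * K < A"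
  by (rule order_tendstoD(2)[of _ 0]) (auto intro!: tendsto_eq_intros)

section \<open>The four shapes\<close>

definition contracts_into :: "complex \<Rightarrow> complex set \<Rightarrow> complex set \<Rightarrow> bool" where
  "contracts_into c K U \<longleftrightarrow> (\<forall>x\<in>K. \<forall>s. 0 < s \<and> s < 1 \<longrightarrow> c + of_real s * (x - c) \<in> U)"

definition pushes_into :: "(complex \<Rightarrow> complex) \<Rightarrow> real \<Rightarrow> complex set \<Rightarrow> complex set \<Rightarrow> bool" where
  "pushes_into \<delta> \<kappa> K U \<longleftrightarrow> 0 < \<kappa> \<and> (\<forall>v\<in>K. \<forall>t. 0 < t \<and> t \<le> 1 \<longrightarrow> ball (v + of_real t * \<delta> v) (\<kappa> * t) \<subseteq> U)"

lemma contracts_into_rel_interior: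
  assumes "convex K" "c \<in> rel_interior K"
  shows "contracts_into c K (rel_interior K)"
  unfolding contracts_into_def
proof (intro ballI allI impI)
  fix x and s :: real
  assume "x \<in> K" "0 < s \<and> s < 1"
  then have "x - (1 - s) *\<^sub>R (x - c) \<in> rel_interior K"
    using assms closure_subset by (intro rel_interior_closure_convex_shrink) auto
  then show "c + of_real s * (x - c) \<in> rel_interior K"
    by (simp add: scaleR_conv_of_real algebra_simps)
qed

lemma contracts_into_segment:
  "a \<noteq> b \<Longrightarrow> contracts_into (midpoint a b) (closed_segment a b) (open_segment a b)"
  using contracts_into_rel_interior[of "closed_segment a b" "midpoint a b"]
  by (simp add: rel_interior_closed_segment)

lemma contracts_into_ball: "0 < r \<Longrightarrow> contracts_into c (cball c r) (ball c r)"
  using contracts_into_rel_interior[of "cball c r" c]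
  by (simp add: rel_interior_nonempty_interior)

lemma shrink_open_unit_interval:
  fixes s u :: real
  assumes "0 < s" "s < 1" "0 \<le> u" "u \<le> 1"
  shows "0 < 1/2 + s * (u - 1/2) \<and> 1/2 + s * (u - 1/2) < 1"
proof -
  have "s * (u - 1/2) \<le> s * (1/2)" "s * (-1/2) \<le> s * (u - 1/2)"
    using assms by (intro mult_left_mono; simp)+
  then show ?thesis using assms by linarith
qed

lemma contracts_into_square:
  "contracts_into (a + w * (1/2 + \<i>/2)) (closed_square a w) (open_square a w)"
  unfolding contracts_into_def
proof (intro ballI allI impI)
  fix x and s :: real
  assume x: "x \<in> closed_square a w" and s: "0 < s \<and> s < 1"
  then obtain p q :: real where pq: "0 \<le> p" "p \<le> 1" "0 \<le> q" "q \<le> 1"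
    and x_eq: "x = a + w * (of_real p + \<i> * of_real q)"
    by (auto simp: closed_square_def)
  define p' q' where "p' = 1/2 + s * (p - 1/2)" and "q' = 1/2 + s * (q - 1/2)"
  have "a + w * (1/2 + \<i>/2) + of_real s * (x - (a + w * (1/2 + \<i>/2)))
      = a + w * (of_real p' + \<i> * of_real q')"
    by (simp add: x_eq p'_def q'_def algebra_simps)
  moreover have "0 < p' \<and> p' < 1" "0 < q' \<and> q' < 1"
    using shrink_open_unit_interval s pq unfolding p'_def q'_def by auto
  ultimately show "a + w * (1/2 + \<i>/2) + of_real s * (x - (a + w * (1/2 + \<i>/2))) \<in> open_square a w"
    unfolding open_square_def by blast
qed

lemma compact_closed_square: "compact (closed_square a w)"
proof -
  have eq: "closed_square a w = (\<lambda>(s, t). a + w * (of_real s + \<i> * of_real t)) ` ({0..1} \<times> {0..1})"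
    unfolding closed_square_def image_def by force
  show ?thesis unfolding eq
    by (intro compact_continuous_image compact_Times compact_Icc)
       (auto intro!: continuous_intros simp: case_prod_unfold)
qed

lemma open_square_subset: "open_square a w \<subseteq> closed_square a w"
  unfolding open_square_def closed_square_def by (blast intro: less_imp_le)

lemma closed_annulus_eq: "closed_annulus c r1 r2 = cball c r2 - ball c r1"
  by (auto simp: closed_annulus_def dist_norm norm_minus_commute)

lemma compact_closed_annulus: "compact (closed_annulus c r1 r2)"
  by (simp add: closed_annulus_eq compact_diff)

lemma pushes_into_annulus:
  assumes r: "0 < r1" "r1 < r2"
  defines "m \<equiv> (r1 + r2) / 2"
  shows "pushes_into (\<lambda>v. of_real ((m - cmod (v - c)) / cmod (v - c)) * (v - c)) ((r2 - r1) / 4)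
           (closed_annulus c r1 r2) (open_annulus c r1 r2)"
  unfolding pushes_into_def
proof (intro conjI ballI allI impI subsetI)
  show "0 < (r2 - r1) / 4" using r by simp
  fix v y and t :: real
  assume v: "v \<in> closed_annulus c r1 r2" and t: "0 < t \<and> t \<le> 1"
  define \<rho> where "\<rho> = cmod (v - c)"
  define \<kappa> where "\<kappa> = (r2 - r1) / 4"
  define a where "a = (m - \<rho>) / \<rho>"
  define u where "u = v + of_real a * of_real t * (v - c)"
  assume "y \<in> ball (v + of_real t * (of_real ((m - cmod (v - c)) / cmod (v - c)) * (v - c))) (((r2 - r1) / 4) * t)"
  then have y: "cmod (y - u) < \<kappa> * t"
    by (simp add: u_def a_def \<rho>_def \<kappa>_def dist_norm norm_minus_commute mult_ac)
  have \<rho>: "r1 \<le> \<rho>" "\<rho> \<le> r2" using v by (auto simp: closed_annulus_def \<rho>_def)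
  have scale: "1 + a * t = ((1 - t) * \<rho> + t * m) / \<rho>"
    using \<rho> r by (simp add: a_def field_simps)
  have "u - c = of_real (1 + a * t) * (v - c)"
    by (simp add: u_def algebra_simps)
  then have "cmod (u - c) = \<bar>((1 - t) * \<rho> + t * m) / \<rho>\<bar> * \<rho>"
    unfolding scale by (simp only: norm_mult norm_of_real \<rho>_def)
  moreover have "0 < (1 - t) * \<rho> + t * m"
    using t \<rho> r by (intro add_nonneg_pos mult_nonneg_nonneg mult_pos_pos) (auto simp: m_def)
  ultimately have norm_u: "cmod (u - c) = (1 - t) * \<rho> + t * m"
    using \<rho> r by simp
  have "(1 - t) * r1 \<le> (1 - t) * \<rho>" "(1 - t) * \<rho> \<le> (1 - t) * r2"
    using t \<rho> by (simp_all add: mult_left_mono)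
  moreover have "t * r1 < t * (m - \<kappa>)" "t * (m + \<kappa>) < t * r2"
    using t r by (simp_all add: m_def \<kappa>_def field_simps)
  moreover have "cmod (u - c) - cmod (y - u) \<le> cmod (y - c)" "cmod (y - c) \<le> cmod (y - u) + cmod (u - c)"
    using norm_triangle_ineq2[of "u - c" "u - y"] norm_triangle_ineq[of "y - u" "u - c"]
    by (simp_all add: norm_minus_commute)
  ultimately show "y \<in> open_annulus c r1 r2"
    using y norm_u by (simp add: open_annulus_def algebra_simps)
qed

lemma closure_eq_if_contracts_into:
  assumes "closed K" "U \<subseteq> K" "contracts_into c K U"
  shows "closure U = K"
proof
  show "closure U \<subseteq> K" using assms closure_minimal by blast
  show "K \<subseteq> closure U"
  proof
    fix x assume "x \<in> K"
    have "((\<lambda>s. c + of_real s * (x - c)) \<longlongrightarrow> c + of_real 1 * (x - c)) (at_left 1)"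
      by (intro tendsto_intros)
    moreover have "\<forall>\<^sub>F s in at_left 1. c + of_real s * (x - c) \<in> U"
      using eventually_at_left_real[of 0 "1::real"] \<open>x \<in> K\<close> assms(3)
      by (auto simp: contracts_into_def elim: eventually_mono)
    ultimately show "x \<in> closure U" by (intro in_closure_if_tendsto) auto
  qed
qed

lemma closure_eq_if_pushes_into:
  assumes "closed K" "U \<subseteq> K" "pushes_into \<delta> \<kappa> K U"
  shows "closure U = K"
proof
  show "closure U \<subseteq> K" using assms closure_minimal by blast
  show "K \<subseteq> closure U"
  proof
    fix v assume "v \<in> K"
    have "v + of_real t * \<delta> v \<in> U" if "0 < t" "t < 1" for t
      using assms(3) \<open>v \<in> K\<close> that unfolding pushes_into_def
      by (meson centre_in_ball less_imp_le mult_pos_pos subsetD)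
    then have "\<forall>\<^sub>F t in at_right 0. v + of_real t * \<delta> v \<in> U"
      using eventually_at_right_real[of 0 "1::real"] by (auto elim: eventually_mono)
    moreover have "((\<lambda>t. v + of_real t * \<delta> v) \<longlongrightarrow> v + of_real 0 * \<delta> v) (at_right 0)"
      by (intro tendsto_intros)
    ultimately show "v \<in> closure U" by (intro in_closure_if_tendsto) auto
  qed
qed

lemma shape_pairE:
  assumes "shape_pair K U"
  obtains c where "compact K" "U \<subseteq> K" "contracts_into c K U"
    | \<delta> \<kappa> where "compact K" "U \<subseteq> K" "pushes_into \<delta> \<kappa> K U"
  using assms unfolding shape_pair_def
proof (elim disjE exE conjE)
  fix a b assume "a \<noteq> b" "K = closed_segment a b" "U = open_segment a b"
  then show thesis
    by (intro that(1)[of "midpoint a b"]) (simp_all add: contracts_into_segment segment_open_subset_closed)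
next
  fix a w assume "K = closed_square a w" "U = open_square a w"
  then show thesis
    by (intro that(1)[of "a + w * (1/2 + \<i>/2)"])
       (simp_all add: contracts_into_square compact_closed_square open_square_subset)
next
  fix c r assume "0 < r" "K = cball c r" "U = ball c r"
  then show thesis
    by (intro that(1)[of c]) (simp_all add: contracts_into_ball)
next
  fix c r1 r2 assume r: "0 < r1" "r1 < r2" and K: "K = closed_annulus c r1 r2" and U: "U = open_annulus c r1 r2"
  obtain \<delta> \<kappa> where "pushes_into \<delta> \<kappa> K U"
    using pushes_into_annulus[OF r, of c] unfolding K U by blast
  moreover have "U \<subseteq> K" unfolding K U by (auto simp: open_annulus_def closed_annulus_def)
  ultimately show thesis
    using that(2) compact_closed_annulus K by blast
qed

lemma closure_of_Cn_top_PiE: "Cn_top n closure_of (PiE {..<n} (\<lambda>_. U)) = PiE {..<n} (\<lambda>_. closure U)"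
  by (simp add: Cn_top_def closure_of_product_topology)

lemma compactin_Cn_top_PiE: "compact K \<Longrightarrow> compactin (Cn_top n) (PiE {..<n} (\<lambda>_. K))"
  by (simp add: Cn_top_def compactin_PiE)

lemma topspace_Cn_top: "topspace (Cn_top n) = PiE {..<n} (\<lambda>_. UNIV)"
  by (simp add: Cn_top_def)

lemma openin_quotient_top:
  "openin (quotient_top X f) S \<longleftrightarrow> S \<subseteq> f ` topspace X \<and> openin X {x \<in> topspace X. f x \<in> S}"
  unfolding quotient_top_def topology_inverse'[OF istopology_quotient_top] by simp

lemma topspace_quotient_top: "topspace (quotient_top X f) = f ` topspace X"
proof -
  have "{x \<in> topspace X. f x \<in> f ` topspace X} = topspace X"
    by auto
  then have "openin (quotient_top X f) (f ` topspace X)"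
    by (simp add: openin_quotient_top)
  then show ?thesis
    using openin_subset openin_quotient_top[of X f "topspace (quotient_top X f)"] by blast
qed

lemma closedin_quotient_top:
  "closedin (quotient_top X f) S \<longleftrightarrow> S \<subseteq> f ` topspace X \<and> closedin X {x \<in> topspace X. f x \<in> S}"
proof -
  have "{x \<in> topspace X. f x \<in> f ` topspace X - S} = topspace X - {x \<in> topspace X. f x \<in> S}"
    by auto
  then show ?thesis
    by (simp add: closedin_def openin_quotient_top topspace_quotient_top)
qed

lemma continuous_map_quotient_top: "continuous_map X (quotient_top X f) f"
  unfolding continuous_map_def openin_quotient_top topspace_quotient_top by auto

lemma size_mult_of: "size (mult_of n g) = n"
  unfolding mult_of_def by simp

lemma set_mset_mult_of: "set_mset (mult_of n g) = g ` {..<n}"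
  unfolding mult_of_def by simp

lemma mult_of_in_Mult_iff: "mult_of n g \<in> Mult n A \<longleftrightarrow> g ` {..<n} \<subseteq> A"
  unfolding Mult_def mem_Collect_eq size_mult_of set_mset_mult_of by simp

lemma mult_of_PiE: "mult_of n ` PiE {..<n} (\<lambda>_. A) = Mult n A"
proof (intro equalityI subsetI)
  fix M assume "M \<in> mult_of n ` PiE {..<n} (\<lambda>_. A)"
  then obtain g where "g ` {..<n} \<subseteq> A" "M = mult_of n g"
    by (auto simp: PiE_def Pi_def)
  then show "M \<in> Mult n A"
    by (simp add: mult_of_in_Mult_iff)
next
  fix M assume M: "M \<in> Mult n A"
  obtain xs where xs: "mset xs = M" using ex_mset by blast
  have len: "length xs = n" using M xs by (auto simp: Mult_def)
  define g where "g = (\<lambda>i. if i < n then xs ! i else undefined)"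
  have "mult_of n g = mset (map g [0..<n])"
    by (simp add: mult_of_def mset_set_upto_eq_mset_upto)
  also have "map g [0..<n] = xs"
    using len by (intro nth_equalityI) (auto simp: g_def)
  finally have "mult_of n g = M"
    using xs by simp
  moreover have "g \<in> PiE {..<n} (\<lambda>_. A)"
    using M xs len by (auto simp: Mult_def g_def PiE_iff extensional_def)
  ultimately show "M \<in> mult_of n ` PiE {..<n} (\<lambda>_. A)" by blast
qed

lemma mult_of_preimage_Mult:
  "{x \<in> topspace (Cn_top n). mult_of n x \<in> Mult n A} = PiE {..<n} (\<lambda>_. A)"
  unfolding topspace_Cn_top mult_of_in_Mult_iff by (auto simp: PiE_def Pi_def)

lemma closedin_Mult:
  assumes "closed A"
  shows "closedin (Mult_top n) (Mult n A)"
proof -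
  have "closedin (Cn_top n) (PiE {..<n} (\<lambda>_. A))"
    using assms by (simp add: closure_of_eq[symmetric] closure_of_Cn_top_PiE)
  moreover have "Mult n A \<subseteq> mult_of n ` topspace (Cn_top n)"
    by (auto simp: topspace_Cn_top mult_of_PiE Mult_def)
  ultimately show ?thesis
    unfolding Mult_top_def closedin_quotient_top mult_of_preimage_Mult by blast
qed

lemma compactin_Mult: "compact A \<Longrightarrow> compactin (Mult_top n) (Mult n A)"
  unfolding Mult_top_def mult_of_PiE[symmetric]
  by (rule image_compactin[OF compactin_Cn_top_PiE continuous_map_quotient_top])

lemma closure_of_Mult: "Mult_top n closure_of (Mult n U) = Mult n (closure U)"
proof
  show "Mult_top n closure_of Mult n U \<subseteq> Mult n (closure U)"
    by (intro closure_of_minimal closedin_Mult) (auto simp: Mult_def intro: closure_subset[THEN subsetD])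
  have "mult_of n ` (Cn_top n closure_of PiE {..<n} (\<lambda>_. U)) \<subseteq> Mult_top n closure_of mult_of n ` PiE {..<n} (\<lambda>_. U)"
    unfolding Mult_top_def by (rule continuous_map_image_closure_subset[OF continuous_map_quotient_top])
  then show "Mult n (closure U) \<subseteq> Mult_top n closure_of Mult n U"
    by (simp add: closure_of_Cn_top_PiE mult_of_PiE)
qed

lemma norm_poly_le_coeff_bound:
  fixes r :: "complex poly"
  assumes "\<And>k. N \<le> k \<Longrightarrow> coeff r k = 0" "\<And>k. cmod (coeff r k) \<le> e" "cmod z \<le> R"
  shows "cmod (poly r z) \<le> e * (\<Sum>i<N. R ^ i)"
proof -
  have "poly r z = (\<Sum>i<N. coeff r i * z ^ i)"
  proof -
    have "poly r z = (\<Sum>i\<le>degree r. coeff r i * z ^ i)"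
      by (rule poly_altdef)
    also have "\<dots> = (\<Sum>i<N. coeff r i * z ^ i)"
    proof (cases "r = 0")
      case False
      then have "degree r < N"
        using assms(1) leading_coeff_neq_0 not_le by blast
      then show ?thesis
        by (intro sum.mono_neutral_left) (auto simp: coeff_eq_0)
    qed (simp add: assms(1))
    finally show ?thesis .
  qed
  also have "cmod \<dots> \<le> (\<Sum>i<N. e * R ^ i)"
  proof (rule order_trans[OF norm_sum sum_mono])
    fix i
    have "0 \<le> e" using assms(2) norm_ge_zero order_trans by blast
    then show "cmod (coeff r i * z ^ i) \<le> e * R ^ i"
      using assms(2,3) by (auto simp: norm_mult norm_power intro!: mult_mono power_mono)
  qed
  finally show ?thesis by (simp add: sum_distrib_left)
qed

lemma complex_poly_rootsE:
  fixes r :: "complex poly"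
  obtains root where "\<And>z. poly r z = lead_coeff r * (\<Prod>i<degree r. z - root i)"
proof -
  obtain root where r: "smult (lead_coeff r) (\<Prod>i<degree r. [:-root i, 1:]) = r"
    by (rule complex_poly_decompose')
  have "poly r z = lead_coeff r * (\<Prod>i<degree r. z - root i)" for z
    by (subst r[symmetric]) (simp add: poly_prod)
  then show ?thesis using that by blast
qed

lemma poly_root_near:
  fixes r :: "complex poly"
  assumes "r \<noteq> 0" "0 < \<rho>" "cmod (poly r z) < cmod (lead_coeff r) * \<rho> ^ degree r"
  obtains w where "poly r w = 0" "cmod (z - w) < \<rho>"
proof -
  obtain root where r: "\<And>z. poly r z = lead_coeff r * (\<Prod>i<degree r. z - root i)"
    using complex_poly_rootsE by blast
  show thesis
  proof (cases "\<exists>i<degree r. cmod (z - root i) < \<rho>")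
    case True
    then obtain i where "i < degree r" "cmod (z - root i) < \<rho>" by blast
    moreover have "poly r (root i) = 0"
      using \<open>i < degree r\<close> by (auto simp: r intro!: prod_zero)
    ultimately show thesis using that by blast
  next
    case False
    then have "(\<Prod>i<degree r. \<rho>) \<le> (\<Prod>i<degree r. cmod (z - root i))"
      using assms(2) by (intro prod_mono) (auto simp: not_less dest: leD)
    then have "\<rho> ^ degree r \<le> (\<Prod>i<degree r. cmod (z - root i))"
      by simp
    then have "cmod (lead_coeff r) * \<rho> ^ degree r \<le> cmod (poly r z)"
      by (simp add: r norm_mult prod_norm mult_left_mono)
    then show thesis using assms(3) by simp
  qed
qed

lemma norm_root_le_Cauchy_bound:
  fixes r :: "complex poly"
  assumes "r \<noteq> 0" "poly r z = 0"
  shows "cmod z \<le> 1 + (\<Sum>i<degree r. cmod (coeff r i)) / cmod (lead_coeff r)"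
proof (rule ccontr)
  define m L S where "m = degree r" and "L = cmod (lead_coeff r)" and "S = (\<Sum>i<m. cmod (coeff r i))"
  assume "\<not> ?thesis"
  then have big: "1 + S / L < cmod z" by (simp add: m_def L_def S_def)
  have L: "0 < L" using assms(1) by (simp add: L_def)
  have "0 \<le> S / L" using L by (simp add: S_def sum_nonneg)
  then have z: "1 < cmod z" using big by linarith
  have "S < L * (cmod z - 1)" using big L by (simp add: field_simps)
  have "m \<noteq> 0"
    using assms by (metis m_def degree_0_id poly_const_conv pCons_0_0 leading_coeff_0_iff)
  have "poly r z = (\<Sum>i<m. coeff r i * z ^ i) + lead_coeff r * z ^ m"
    by (simp add: poly_altdef m_def lessThan_Suc_atMost[symmetric])
  then have "lead_coeff r * z ^ m = - (\<Sum>i<m. coeff r i * z ^ i)"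
    using assms(2) by (simp add: add_eq_0_iff)
  then have "L * cmod z ^ m = cmod (\<Sum>i<m. coeff r i * z ^ i)"
    by (metis L_def norm_minus_cancel norm_mult norm_power)
  also have "\<dots> \<le> (\<Sum>i<m. cmod (coeff r i) * cmod z ^ (m - 1))"
    using z by (intro order_trans[OF norm_sum sum_mono])
      (auto simp: norm_mult norm_power intro!: mult_left_mono power_increasing)
  also have "\<dots> = S * cmod z ^ (m - 1)"
    by (simp add: S_def sum_distrib_right)
  finally have "L * cmod z * cmod z ^ (m - 1) \<le> S * cmod z ^ (m - 1)"
    using \<open>m \<noteq> 0\<close> by (metis mult.assoc power_eq_if)
  moreover have "0 < cmod z ^ (m - 1)"
    using z by (intro zero_less_power) linarith
  ultimately have "L * cmod z \<le> S"
    by (rule mult_right_le_imp_le)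
  then show False
    using \<open>S < L * (cmod z - 1)\<close> L by (simp add: algebra_simps)
qed

lemma degree_eq_sum_order:
  fixes q :: "complex poly"
  assumes "q \<noteq> 0"
  shows "degree q = (\<Sum>z | poly q z = 0. order z q)"
proof -
  have "degree q = degree (smult (lead_coeff q) (\<Prod>z | poly q z = 0. [:-z, 1:] ^ order z q))"
    using complex_poly_decompose[of q] by simp
  also have "\<dots> = (\<Sum>z | poly q z = 0. degree ([:-z, 1:] ^ order z q))"
    using assms by (simp add: degree_prod_eq_sum_degree)
  also have "\<dots> = (\<Sum>z | poly q z = 0. order z q)"
    by (simp add: degree_power_eq)
  finally show ?thesis .
qed

lemma coeff_linear_power_pred: "coeff ([:a, 1:] ^ Suc n) n = of_nat (Suc n) * (a :: complex)"
proof (induction n)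
  case (Suc n)
  have "[:a, 1:] ^ Suc (Suc n) = smult a ([:a, 1:] ^ Suc n) + pCons 0 ([:a, 1:] ^ Suc n)"
    by (simp add: mult_pCons_left)
  then have "coeff ([:a, 1:] ^ Suc (Suc n)) (Suc n)
      = a * coeff ([:a, 1:] ^ Suc n) (Suc n) + coeff ([:a, 1:] ^ Suc n) n"
    by simp
  then show ?case
    using Suc by (simp only: coeff_linear_power) (simp add: algebra_simps)
qed simp

lemma lagrange_interpolation:
  fixes f :: "complex \<Rightarrow> complex"
  assumes "finite S"
  obtains h where "\<And>k. card S \<le> k \<Longrightarrow> coeff h k = 0" "\<And>x. x \<in> S \<Longrightarrow> poly h x = f x"
proof -
  have "\<exists>h. (\<forall>k\<ge>card S. coeff h k = 0) \<and> (\<forall>x\<in>S. poly h x = f x)"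
    using assms
  proof (induction S rule: finite_induct)
    case empty
    show ?case by (intro exI[of _ 0]) simp
  next
    case (insert a S)
    then obtain h where h: "\<forall>k\<ge>card S. coeff h k = 0" "\<forall>x\<in>S. poly h x = f x" by blast
    define g where "g = (\<Prod>x\<in>S. [:-x, 1:])"
    have g: "poly g z = (\<Prod>x\<in>S. z - x)" for z by (simp add: g_def poly_prod)
    have "degree g = card S"
      unfolding g_def by (subst degree_prod_eq_sum_degree) auto
    moreover have "poly g a \<noteq> 0" "\<forall>x\<in>S. poly g x = 0"
      using insert.hyps by (auto simp: g)
    ultimately show ?case
      using h insert.hyps coeff_eq_0[of g]
      by (intro exI[of _ "h + smult ((f a - poly h a) / poly g a) g"]) auto
  qed
  then show ?thesis using that by blast
qed

lemma norm_poly_le_away_from_roots: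
  fixes r :: "complex poly"
  assumes "\<And>x. poly r x = 0 \<Longrightarrow> \<rho> \<le> cmod (w - x)" "cmod (z - w) \<le> \<rho>"
  shows "cmod (poly r z) \<le> 2 ^ degree r * cmod (poly r w)"
proof -
  obtain root where r: "\<And>z. poly r z = lead_coeff r * (\<Prod>i<degree r. z - root i)"
    using complex_poly_rootsE by blast
  have "cmod (z - root i) \<le> 2 * cmod (w - root i)" if "i < degree r" for i
  proof -
    have "poly r (root i) = 0"
      using that by (auto simp: r intro!: prod_zero)
    then have "cmod (z - w) \<le> cmod (w - root i)"
      using assms by force
    then show ?thesis
      using norm_triangle_ineq[of "z - w" "w - root i"] by simp
  qed
  then have "(\<Prod>i<degree r. cmod (z - root i)) \<le> (\<Prod>i<degree r. 2 * cmod (w - root i))"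
    by (intro prod_mono) auto
  then show ?thesis
    by (simp add: r norm_mult prod_norm prod.distrib mult.left_commute mult_left_mono)
qed

lemma norm_poly_diff_le_nearest_critical_point:
  fixes p :: "complex poly"
  assumes "\<And>x. poly (pderiv p) x = 0 \<Longrightarrow> cmod (w' - w) \<le> cmod (w' - x)"
  shows "cmod (poly p w' - poly p w) \<le> 2 ^ degree (pderiv p) * cmod (poly (pderiv p) w') * cmod (w' - w)"
proof (rule field_differentiable_bound[of "closed_segment w' w"])
  fix z assume z: "z \<in> closed_segment w' w"
  show "(poly p has_field_derivative poly (pderiv p) z) (at z within closed_segment w' w)"
    by (rule DERIV_subset[OF poly_DERIV]) simp
  have "cmod (z - w') \<le> cmod (w' - w)"
    using dist_in_closed_segment[OF z] by (simp add: dist_norm norm_minus_commute)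
  then show "cmod (poly (pderiv p) z) \<le> 2 ^ degree (pderiv p) * cmod (poly (pderiv p) w')"
    using assms by (intro norm_poly_le_away_from_roots) auto
qed auto

lemma centered_monicD:
  assumes "p \<in> centered_monic d"
  shows "degree p = d" "coeff p d = 1" "coeff p (d - 1) = 0" "1 \<le> d" "p \<noteq> 0"
proof -
  show "degree p = d" "coeff p d = 1" "coeff p (d - 1) = 0"
    using assms by (auto simp: centered_monic_def)
  then show "1 \<le> d" "p \<noteq> 0"
    by (auto intro!: Suc_leI Nat.gr0I)
qed

lemma centered_monicI:
  assumes "coeff p d = 1" "\<And>k. d < k \<Longrightarrow> coeff p k = 0" "coeff p (d - 1) = 0"
  shows "p \<in> centered_monic d"
proof -
  have "degree p = d"
    using assms(1,2) by (intro antisym degree_le le_degree) auto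
  then show ?thesis
    using assms by (simp add: centered_monic_def)
qed

lemma centered_monic_pderiv:
  assumes "p \<in> centered_monic d"
  shows "degree (pderiv p) = d - 1" "lead_coeff (pderiv p) = of_nat d" "pderiv p \<noteq> 0"
proof -
  note p = centered_monicD[OF assms]
  show deg: "degree (pderiv p) = d - 1"
    using p by (simp add: degree_pderiv)
  show "lead_coeff (pderiv p) = of_nat d"
    using p by (simp add: deg coeff_pderiv)
  then show "pderiv p \<noteq> 0"
    using p by auto
qed

definition centered_monic_of :: "nat \<Rightarrow> (nat \<Rightarrow> complex) \<Rightarrow> complex poly" where
  "centered_monic_of d g = monom 1 d + (\<Sum>k<d - 1. monom (g k) k)"

lemma coeff_centered_monic_of:
  "coeff (centered_monic_of d g) k = (if k = d then 1 else if k < d - 1 then g k else 0)"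
  by (auto simp: centered_monic_of_def coeff_sum)

lemma restrict_coeff_centered_monic_of:
  "g \<in> extensional {..<d - 1} \<Longrightarrow> restrict (coeff (centered_monic_of d g)) {..<d - 1} = g"
  by (rule ext) (auto simp: coeff_centered_monic_of extensional_def)

lemma centered_monic_of_in: "1 \<le> d \<Longrightarrow> centered_monic_of d g \<in> centered_monic d"
  by (intro centered_monicI) (auto simp: coeff_centered_monic_of)

lemma centered_monic_of_coeff:
  assumes "p \<in> centered_monic d"
  shows "centered_monic_of d (coeff p) = p"
proof (rule poly_eqI)
  fix k
  have "k = d \<or> k = d - 1 \<or> k < d - 1 \<or> d < k" by linarith
  then show "coeff (centered_monic_of d (coeff p)) k = coeff p k"
    using centered_monicD[OF assms] by (auto simp: coeff_centered_monic_of coeff_eq_0)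
qed

lemma topspace_Poly_mt_top: "topspace (Poly_mt_top d) = centered_monic d"
  by (auto simp: Poly_mt_top_def topspace_pullback_topology topspace_Cn_top)

lemma continuous_map_centered_monic_of:
  assumes "1 \<le> d"
  shows "continuous_map (Cn_top (d - 1)) (Poly_mt_top d) (centered_monic_of d)"
  unfolding Poly_mt_top_def
proof (rule continuous_map_pullback')
  show "continuous_map (Cn_top (d - 1)) (Cn_top (d - 1))
          ((\<lambda>p. restrict (coeff p) {..<d - 1}) \<circ> centered_monic_of d)"
    by (rule continuous_map_eq[OF continuous_map_id])
       (metis topspace_Cn_top PiE_def IntD2 id_apply comp_apply restrict_coeff_centered_monic_of)
  show "topspace (Cn_top (d - 1)) \<subseteq> centered_monic_of d -` centered_monic d"
    using centered_monic_of_in[OF assms] by blast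
qed

lemma continuous_map_coeff:
  assumes "k < d - 1"
  shows "continuous_map (Poly_mt_top d) euclidean (\<lambda>p. coeff p k)"
proof -
  have "continuous_map (Poly_mt_top d) euclidean ((\<lambda>x. x k) \<circ> (\<lambda>p. restrict (coeff p) {..<d - 1}))"
    unfolding Poly_mt_top_def Cn_top_def using assms
    by (intro continuous_map_pullback continuous_map_product_projection) auto
  then show ?thesis
    using assms by (simp add: comp_def)
qed

lemma compactin_Poly_mt_top_coeff_bounded:
  "compactin (Poly_mt_top d) {p \<in> centered_monic d. \<forall>k<d - 1. cmod (coeff p k) \<le> R}"
proof (cases "d = 0")
  case True
  then show ?thesis
    using centered_monicD(4) by (metis (no_types, lifting) compactin_empty empty_Collect_eq not_one_le_zero)
next
  case False
  then have d: "1 \<le> d" by simp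
  have "{p \<in> centered_monic d. \<forall>k<d - 1. cmod (coeff p k) \<le> R}
      = centered_monic_of d ` PiE {..<d - 1} (\<lambda>_. cball 0 R)"
  proof (intro equalityI subsetI)
    fix p assume p: "p \<in> {p \<in> centered_monic d. \<forall>k<d - 1. cmod (coeff p k) \<le> R}"
    then have "restrict (coeff p) {..<d - 1} \<in> PiE {..<d - 1} (\<lambda>_. cball 0 R)"
      by auto
    moreover have "centered_monic_of d (restrict (coeff p) {..<d - 1}) = p"
      using centered_monic_of_coeff[of p d] p by (simp add: centered_monic_of_def)
    ultimately show "p \<in> centered_monic_of d ` PiE {..<d - 1} (\<lambda>_. cball 0 R)"
      by (metis image_eqI)
  qed (auto simp: centered_monic_of_in[OF d] coeff_centered_monic_of PiE_def Pi_def)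
  then show ?thesis
    using image_compactin[OF compactin_Cn_top_PiE continuous_map_centered_monic_of[OF d]] by simp
qed

lemma openin_Poly_mt_top_coeff_ball:
  "openin (Poly_mt_top d) {q \<in> centered_monic d. \<forall>k<d - 1. dist (coeff q k) (coeff p k) < e}"
proof -
  have "openin (Cn_top (d - 1)) (PiE {..<d - 1} (\<lambda>k. ball (coeff p k) e))"
    unfolding Cn_top_def by (subst openin_PiE) auto
  moreover have "{q \<in> centered_monic d. \<forall>k<d - 1. dist (coeff q k) (coeff p k) < e}
      = (\<lambda>q. restrict (coeff q) {..<d - 1}) -` PiE {..<d - 1} (\<lambda>k. ball (coeff p k) e) \<inter> centered_monic d"
    by (auto simp: PiE_def Pi_def dist_commute)
  ultimately show ?thesis
    unfolding Poly_mt_top_def openin_pullback_topology by blast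
qed

lemma limitin_Cn_top_restrict_coeff:
  assumes "\<And>k. k < n \<Longrightarrow> ((\<lambda>x. coeff (Q x) k) \<longlongrightarrow> coeff p k) F"
  shows "limitin (Cn_top n) (\<lambda>x. restrict (coeff (Q x)) {..<n}) (restrict (coeff p) {..<n}) F"
  unfolding Cn_top_def limitin_componentwise
proof (intro conjI ballI)
  show "restrict (coeff p) {..<n} \<in> extensional {..<n}" by simp
  show "\<forall>\<^sub>F x in F. restrict (coeff (Q x)) {..<n} \<in> topspace (product_topology (\<lambda>_. euclidean) {..<n})"
    by simp
  fix i assume "i \<in> {..<n}"
  then show "limitin euclidean (\<lambda>c. restrict (coeff (Q c)) {..<n} i) (restrict (coeff p) {..<n} i) F"
    using assms by simp
qed

lemma limitin_Poly_mt_topI: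
  assumes "p \<in> centered_monic d" "\<forall>\<^sub>F x in F. Q x \<in> centered_monic d"
    and "\<And>k. k < d - 1 \<Longrightarrow> ((\<lambda>x. coeff (Q x) k) \<longlongrightarrow> coeff p k) F"
  shows "limitin (Poly_mt_top d) Q p F"
  unfolding limitin_def
proof (intro conjI allI impI)
  show "p \<in> topspace (Poly_mt_top d)"
    using assms(1) by (simp add: topspace_Poly_mt_top)
  fix T assume "openin (Poly_mt_top d) T \<and> p \<in> T"
  then obtain V where V: "openin (Cn_top (d - 1)) V" "T = (\<lambda>q. restrict (coeff q) {..<d - 1}) -` V \<inter> centered_monic d"
    and pT: "p \<in> T"
    unfolding Poly_mt_top_def openin_pullback_topology by blast
  have "\<forall>\<^sub>F x in F. restrict (coeff (Q x)) {..<d - 1} \<in> V"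
    using limitinD[OF limitin_Cn_top_restrict_coeff[OF assms(3)] V(1)] pT V(2) by blast
  then show "\<forall>\<^sub>F x in F. Q x \<in> T"
    using assms(2) unfolding V(2) by (auto elim: eventually_elim2)
qed

section \<open>Continuity of critical values\<close>

lemma two_le_if_critical_point:
  assumes "p \<in> centered_monic d" "poly (pderiv p) w = 0"
  shows "2 \<le> d"
proof (rule ccontr)
  assume "\<not> 2 \<le> d"
  then have "d = 1" using centered_monicD(4)[OF assms(1)] by simp
  then have "pderiv p = [:1:]"
    using centered_monic_pderiv[OF assms(1)] by (metis degree_0_id diff_self_eq_0 of_nat_1)
  then show False using assms(2) by simp
qed

lemma critical_point_exists:
  assumes "p \<in> centered_monic d" "2 \<le> d"
  obtains w where "poly (pderiv p) w = 0"
proof -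
  obtain root where r: "\<And>z. poly (pderiv p) z = lead_coeff (pderiv p) * (\<Prod>i<degree (pderiv p). z - root i)"
    using complex_poly_rootsE by blast
  have "0 < degree (pderiv p)"
    using centered_monic_pderiv(1)[OF assms(1)] assms(2) by simp
  then have "poly (pderiv p) (root 0) = 0"
    by (auto simp: r intro!: prod_zero)
  then show thesis by (rule that)
qed

lemma centered_monic_add:
  assumes "p \<in> centered_monic d" "\<And>k. d - 1 \<le> k \<Longrightarrow> coeff h k = 0"
  shows "p + h \<in> centered_monic d"
  using centered_monicD[OF assms(1)] assms(2) coeff_eq_0[of p]
  by (intro centered_monicI) auto

lemma coeff_diff_centered_monic:
  assumes "p \<in> centered_monic d" "q \<in> centered_monic d" "0 < e"
    and "\<forall>k<d - 1. dist (coeff q k) (coeff p k) < e"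
  shows "\<And>k. d - 1 \<le> k \<Longrightarrow> coeff (q - p) k = 0" "\<And>k. cmod (coeff (q - p) k) \<le> e"
proof -
  show zero: "coeff (q - p) k = 0" if "d - 1 \<le> k" for k
  proof -
    have "k = d - 1 \<or> k = d \<or> d < k" using that by linarith
    then show ?thesis
      using centered_monicD[OF assms(1)] centered_monicD[OF assms(2)] coeff_eq_0[of p k] coeff_eq_0[of q k]
      by auto
  qed
  show "cmod (coeff (q - p) k) \<le> e" for k
    using assms(3,4) zero[of k] by (cases "k < d - 1") (auto simp: dist_norm)
qed

lemma coeff_pderiv_bound:
  fixes r :: "complex poly" and N :: nat
  assumes "\<And>k. N \<le> k \<Longrightarrow> coeff r k = 0" "\<And>k. cmod (coeff r k) \<le> e"
  shows "\<And>k. N \<le> k \<Longrightarrow> coeff (pderiv r) k = 0" "\<And>k. cmod (coeff (pderiv r) k) \<le> real N * e"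
proof -
  show "coeff (pderiv r) k = 0" if "N \<le> k" for k
    using assms(1) that by (simp add: coeff_pderiv)
  have "0 \<le> e" using assms(2) norm_ge_zero order_trans by blast
  show "cmod (coeff (pderiv r) k) \<le> real N * e" for k
  proof (cases "Suc k < N")
    case True
    then have "real (Suc k) * cmod (coeff r (Suc k)) \<le> real N * e"
      using assms(2) \<open>0 \<le> e\<close> by (intro mult_mono) auto
    then show ?thesis by (simp only: coeff_pderiv norm_mult norm_of_nat)
  next
    case False
    then show ?thesis
      using assms(1) \<open>0 \<le> e\<close> by (simp add: coeff_pderiv)
  qed
qed

lemma critical_value_near_if_coeffs_near:
  assumes p: "p \<in> centered_monic d" and v: "v \<in> critical_values p" and \<eta>: "0 < \<eta>"
  obtains e where "0 < e"
    "\<And>q. q \<in> centered_monic d \<Longrightarrow> \<forall>k<d - 1. dist (coeff q k) (coeff p k) < e \<Longrightarrow>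
       \<exists>v'\<in>critical_values q. dist v' v < \<eta>"
proof -
  \<comment> \<open>If \<open>p'(w) = 0\<close> then \<open>q'(w) = (q - p)'(w)\<close> is small, so \<open>q'\<close> has a root \<open>w'\<close> near \<open>w\<close>,
    and \<open>q(w') \<approx> p(w') \<approx> p(w) = v\<close>.\<close>
  obtain w where w: "poly (pderiv p) w = 0" "v = poly p w"
    using v by (auto simp: critical_values_def)
  obtain \<rho> where \<rho>: "0 < \<rho>" "\<rho> \<le> 1" "\<And>z. dist z w < \<rho> \<Longrightarrow> dist (poly p z) v < \<eta> / 2"
  proof -
    have "continuous (at w) (poly p)" by simp
    then obtain \<rho>' where "0 < \<rho>'" "\<And>z. dist z w < \<rho>' \<Longrightarrow> dist (poly p z) (poly p w) < \<eta> / 2"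
      using \<eta> unfolding continuous_at_eps_delta by (meson half_gt_zero)
    then show thesis
      using w(2) by (intro that[of "min \<rho>' 1"]) auto
  qed
  define K1 K2 where "K1 = (\<Sum>i<d - 1. cmod w ^ i)" and "K2 = (\<Sum>i<d - 1. (cmod w + 1) ^ i)"
  have "0 \<le> K1" by (simp add: K1_def sum_nonneg)
  have "\<forall>\<^sub>F e in at_right 0. e * K1 < \<rho> ^ (d - 1)" "\<forall>\<^sub>F e in at_right 0. e * K2 < \<eta> / 2"
    using \<rho>(1) \<eta> by (simp_all only: eventually_mult_less_at_right_0 zero_less_power half_gt_zero)
  with eventually_at_right_less[of 0]
  have "\<forall>\<^sub>F e in at_right 0. 0 < e \<and> e * K1 < \<rho> ^ (d - 1) \<and> e * K2 < \<eta> / 2"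
    by eventually_elim auto
  then obtain e where e: "0 < e" "e * K1 < \<rho> ^ (d - 1)" "e * K2 < \<eta> / 2"
    using eventually_happens'[OF trivial_limit_at_right_real] by blast
  show thesis
  proof (rule that[OF e(1)])
    fix q assume q: "q \<in> centered_monic d" and close: "\<forall>k<d - 1. dist (coeff q k) (coeff p k) < e"
    note r = coeff_diff_centered_monic[OF p q e(1) close]
    note r' = coeff_pderiv_bound[OF r]
    have "cmod (poly (pderiv q) w) = cmod (poly (pderiv (q - p)) w)"
      using w(1) by (simp add: pderiv_diff)
    also have "\<dots> \<le> (real (d - 1) * e) * K1"
      unfolding K1_def by (rule norm_poly_le_coeff_bound) (use r' in auto)
    also have "\<dots> \<le> real d * (e * K1)"
      using e(1) \<open>0 \<le> K1\<close> by (simp add: mult.assoc mult_right_mono)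
    also have "\<dots> < real d * \<rho> ^ (d - 1)"
      using e(2) centered_monicD(4)[OF p] by simp
    finally obtain w' where w': "poly (pderiv q) w' = 0" "cmod (w - w') < \<rho>"
      using centered_monic_pderiv[OF q] by (auto elim!: poly_root_near[OF _ \<rho>(1)])
    have "cmod w' \<le> cmod w + 1"
      using w'(2) \<rho>(2) norm_triangle_ineq3[of w' w] by (simp add: norm_minus_commute)
    then have "cmod (poly (q - p) w') \<le> e * K2"
      unfolding K2_def using r by (intro norm_poly_le_coeff_bound) auto
    moreover have "dist (poly p w') v < \<eta> / 2"
      using \<rho>(3) w'(2) by (simp add: dist_norm norm_minus_commute)
    ultimately have "dist (poly q w') v < \<eta>"
      using e(3) dist_triangle[of "poly q w'" v "poly p w'"] by (simp add: dist_norm)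
    moreover have "poly q w' \<in> critical_values q"
      using w'(1) by (auto simp: critical_values_def)
    ultimately show "\<exists>v'\<in>critical_values q. dist v' v < \<eta>" by blast
  qed
qed

lemma card_critical_points_le_1:
  assumes p: "p \<in> centered_monic d" and single: "\<forall>v1\<in>critical_values p. \<forall>v2\<in>critical_values p. v1 = v2"
  shows "card {w. poly (pderiv p) w = 0} \<le> 1"
  \<comment> \<open>Each critical point is a root of \<open>p - v\<close> of multiplicity one more than as a root of \<open>p'\<close>;
    counting against \<open>degree p = degree p' + 1\<close> leaves room for one critical point only.\<close>
proof (cases "{w. poly (pderiv p) w = 0} = {}")
  case False
  define R where "R = {w. poly (pderiv p) w = 0}"
  obtain w0 where "w0 \<in> R" using False R_def by blast
  define r where "r = p - [:poly p w0:]"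
  note p' = centered_monic_pderiv[OF p]
  have "degree r = d"
    using centered_monicD[OF p] coeff_eq_0[of p] unfolding r_def
    by (intro antisym degree_le le_degree) (auto simp: coeff_pCons split: nat.split)
  then have "r \<noteq> 0" using centered_monicD(4)[OF p] by (metis degree_0 not_one_le_zero)
  have root: "poly r w = 0" if "w \<in> R" for w
  proof -
    have "poly p w = poly p w0"
      using single that \<open>w0 \<in> R\<close> unfolding critical_values_def R_def by blast
    then show ?thesis by (simp add: r_def)
  qed
  have "card R + (d - 1) = (\<Sum>w\<in>R. Suc (order w (pderiv p)))"
    using degree_eq_sum_order[OF p'(3)] p'(1) by (simp add: R_def sum_Suc)
  also have "\<dots> = (\<Sum>w\<in>R. order w r)"
    using root \<open>r \<noteq> 0\<close> by (intro sum.cong) (auto simp: order_pderiv r_def pderiv_diff)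
  also have "\<dots> \<le> (\<Sum>w | poly r w = 0. order w r)"
    using root poly_roots_finite[OF \<open>r \<noteq> 0\<close>] by (intro sum_mono2) auto
  also have "\<dots> = d"
    using degree_eq_sum_order[OF \<open>r \<noteq> 0\<close>] \<open>degree r = d\<close> by simp
  finally show ?thesis
    using centered_monicD(4)[OF p] by (simp add: R_def)
qed simp

lemma single_critical_value_imp_coeff_eq_0:
  assumes p: "p \<in> centered_monic d"
    and single: "\<forall>v1\<in>critical_values p. \<forall>v2\<in>critical_values p. v1 = v2"
    and k: "1 \<le> k" "k < d"
  shows "coeff p k = 0"
proof -
  \<comment> \<open>\<open>p' = d (z - w\<^sub>0)\<^bsup>d-1\<^esup>\<close>, and the vanishing coefficient of \<open>z\<^bsup>d-1\<^esup>\<close> in \<open>p\<close> forces \<open>w\<^sub>0 = 0\<close>.\<close>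
  note p' = centered_monic_pderiv[OF p]
  obtain w0 where w0: "poly (pderiv p) w0 = 0"
    using critical_point_exists[OF p] k by force
  have R: "{w. poly (pderiv p) w = 0} = {w0}"
    using card_critical_points_le_1[OF p single] w0 poly_roots_finite[OF p'(3)]
    by (auto simp: card_le_Suc0_iff_eq)
  have "order w0 (pderiv p) = d - 1"
    using degree_eq_sum_order[OF p'(3)] p'(1) R by simp
  have "pderiv p = smult (lead_coeff (pderiv p)) (\<Prod>z\<in>{w0}. [:-z, 1:] ^ order z (pderiv p))"
    using complex_poly_decompose[of "pderiv p"] unfolding R by (rule sym)
  also have "\<dots> = smult (of_nat d) ([:-w0, 1:] ^ (d - 1))"
    using p'(2) \<open>order w0 (pderiv p) = d - 1\<close> by simp
  finally have p'_eq: "pderiv p = smult (of_nat d) ([:-w0, 1:] ^ (d - 1))" .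
  define m where "m = d - 2"
  have m: "d - 1 = Suc m"
    using k by (simp add: m_def)
  have "of_nat d * (of_nat (Suc m) * (- w0)) = coeff (pderiv p) m"
    by (simp only: p'_eq m coeff_smult coeff_linear_power_pred)
  also have "\<dots> = 0"
    using centered_monicD(3)[OF p] m by (simp add: coeff_pderiv)
  finally have "w0 = 0"
    using k unfolding mult_eq_0_iff of_nat_eq_0_iff neg_equal_0_iff_equal by simp
  then have "coeff (pderiv p) (k - 1) = 0"
    using k p'_eq by (simp add: coeff_monom monom_altdef[symmetric])
  then show ?thesis
    using k by (simp add: coeff_pderiv)
qed

lemma eventually_critical_value_near:
  assumes "p \<in> centered_monic d" "v \<in> critical_values p" "0 < \<eta>"
  shows "\<forall>\<^sub>F q in nhdsin (Poly_mt_top d) p. q \<in> centered_monic d \<and> (\<exists>v'\<in>critical_values q. dist v' v < \<eta>)"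
proof -
  obtain e where e: "0 < e" "\<And>q. q \<in> centered_monic d \<Longrightarrow> \<forall>k<d - 1. dist (coeff q k) (coeff p k) < e \<Longrightarrow>
       \<exists>v'\<in>critical_values q. dist v' v < \<eta>"
    using critical_value_near_if_coeffs_near[OF assms] by blast
  show ?thesis
    unfolding eventually_nhdsin
    using openin_Poly_mt_top_coeff_ball[of d p e] assms(1) e
    by (intro disjI2 exI[of _ "{q \<in> centered_monic d. \<forall>k<d - 1. dist (coeff q k) (coeff p k) < e}"]) auto
qed

lemma closedin_Poly_mt:
  assumes "closed K"
  shows "closedin (Poly_mt_top d) (Poly_mt d K)"
  unfolding closedin_def topspace_Poly_mt_top
proof (intro conjI openin_if_eventually_nhdsin)
  show "Poly_mt d K \<subseteq> centered_monic d" "centered_monic d - Poly_mt d K \<subseteq> topspace (Poly_mt_top d)"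
    by (auto simp: Poly_mt_def topspace_Poly_mt_top)
  fix p assume p: "p \<in> centered_monic d - Poly_mt d K"
  then obtain v where v: "v \<in> critical_values p" "v \<notin> K"
    by (auto simp: Poly_mt_def)
  have "p \<in> centered_monic d" using p by blast
  obtain \<eta> where \<eta>: "0 < \<eta>" "ball v \<eta> \<inter> K = {}"
    using assms v(2) by (metis open_Compl open_contains_ball_eq ComplI disjoint_eq_subset_Compl)
  show "\<forall>\<^sub>F q in nhdsin (Poly_mt_top d) p. q \<in> centered_monic d - Poly_mt d K"
    using eventually_critical_value_near[OF \<open>p \<in> centered_monic d\<close> v(1) \<eta>(1)]
  proof (rule eventually_mono)
    fix q assume "q \<in> centered_monic d \<and> (\<exists>v'\<in>critical_values q. dist v' v < \<eta>)"
    then obtain v' where "q \<in> centered_monic d" "v' \<in> critical_values q" "v' \<in> ball v \<eta>"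
      by (auto simp: dist_commute)
    then show "q \<in> centered_monic d - Poly_mt d K"
      using \<eta>(2) by (auto simp: Poly_mt_def)
  qed
qed

definition critical_spread_gt :: "nat \<Rightarrow> real \<Rightarrow> complex poly set" where
  "critical_spread_gt d m =
     {p \<in> centered_monic d. \<exists>v1\<in>critical_values p. \<exists>v2\<in>critical_values p. m < dist v1 v2}"

lemma openin_critical_spread_gt: "openin (Poly_mt_top d) (critical_spread_gt d m)"
proof (rule openin_if_eventually_nhdsin)
  show "critical_spread_gt d m \<subseteq> topspace (Poly_mt_top d)"
    by (auto simp: critical_spread_gt_def topspace_Poly_mt_top)
  fix p assume "p \<in> critical_spread_gt d m"
  then obtain v1 v2 where p: "p \<in> centered_monic d" and v: "v1 \<in> critical_values p" "v2 \<in> critical_values p"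
    and m: "m < dist v1 v2"
    by (auto simp: critical_spread_gt_def)
  define \<eta> where "\<eta> = (dist v1 v2 - m) / 2"
  have "0 < \<eta>" using m by (simp add: \<eta>_def)
  from eventually_critical_value_near[OF p v(1) this] eventually_critical_value_near[OF p v(2) this]
  show "\<forall>\<^sub>F q in nhdsin (Poly_mt_top d) p. q \<in> critical_spread_gt d m"
  proof eventually_elim
    case (elim q)
    then obtain v1' v2' where "v1' \<in> critical_values q" "v2' \<in> critical_values q"
      and "dist v1' v1 < \<eta>" "dist v2' v2 < \<eta>" and "q \<in> centered_monic d"
      by blast
    moreover have "dist v1 v2 \<le> dist v1' v1 + dist v1' v2' + dist v2' v2"
      by (metis add.commute dist_commute dist_triangle order_trans add_right_mono)
    ultimately have "m < dist v1' v2'"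
      using \<eta>_def by argo
    then show ?case
      using \<open>v1' \<in> critical_values q\<close> \<open>v2' \<in> critical_values q\<close> \<open>q \<in> centered_monic d\<close>
      unfolding critical_spread_gt_def by blast
  qed
qed

lemma critical_spread_gt_antimono: "m \<le> m' \<Longrightarrow> critical_spread_gt d m' \<subseteq> critical_spread_gt d m"
  unfolding critical_spread_gt_def by (auto dest: order.strict_trans1)

lemma compactin_uniform_critical_spread:
  assumes A: "compactin (Poly_mt_top d) A"
    and two: "\<And>p. p \<in> A \<Longrightarrow> \<exists>v1\<in>critical_values p. \<exists>v2\<in>critical_values p. v1 \<noteq> v2"
  obtains m where "0 < m" "\<And>p. p \<in> A \<Longrightarrow> \<exists>v1\<in>critical_values p. \<exists>v2\<in>critical_values p. m \<le> dist v1 v2"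
proof -
  have "A \<subseteq> \<Union>(critical_spread_gt d ` {0<..})"
  proof
    fix p assume "p \<in> A"
    then obtain v1 v2 where "v1 \<in> critical_values p" "v2 \<in> critical_values p" "v1 \<noteq> v2"
      using two by blast
    moreover have "p \<in> centered_monic d"
      using compactin_subset_topspace[OF A] \<open>p \<in> A\<close> by (auto simp: topspace_Poly_mt_top)
    moreover have "dist v1 v2 / 2 < dist v1 v2" using \<open>v1 \<noteq> v2\<close> by simp
    ultimately have "p \<in> critical_spread_gt d (dist v1 v2 / 2)"
      unfolding critical_spread_gt_def by blast
    moreover have "0 < dist v1 v2 / 2" using \<open>v1 \<noteq> v2\<close> by simp
    ultimately show "p \<in> \<Union>(critical_spread_gt d ` {0<..})" by blast
  qed
  then obtain \<F> where \<F>: "finite \<F>" "\<F> \<subseteq> critical_spread_gt d ` {0<..}" "A \<subseteq> \<Union>\<F>"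
    using A openin_critical_spread_gt unfolding compactin_def by (metis (no_types, lifting) imageE)
  then obtain M where M: "finite M" "M \<subseteq> {0<..}" "\<F> = critical_spread_gt d ` M"
    by (meson finite_subset_image)
  define m where "m = Min (insert 1 M)"
  have "0 < m"
    unfolding m_def using M by (subst Min_gr_iff) auto
  moreover have "critical_spread_gt d m' \<subseteq> critical_spread_gt d m" if "m' \<in> M" for m'
    using M that unfolding m_def by (intro critical_spread_gt_antimono Min_le) auto
  then have "A \<subseteq> critical_spread_gt d m"
    using \<F>(3) M(3) by blast
  ultimately show thesis
    by (intro that[of m]) (force simp: critical_spread_gt_def)+
qed

section \<open>Bounded critical values bound the coefficients\<close>

definition rescale_poly :: "complex \<Rightarrow> complex \<Rightarrow> complex \<Rightarrow> complex poly \<Rightarrow> complex poly" where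
  "rescale_poly a l b p = smult a (pcompose p [:0, l:]) + [:b:]"

lemma coeff_rescale_poly: "coeff (rescale_poly a l b p) k = a * l ^ k * coeff p k + (if k = 0 then b else 0)"
  by (cases k) (auto simp: rescale_poly_def coeff_pcompose_linear poly_0_coeff_0)

lemma critical_values_rescale_poly:
  assumes "a \<noteq> 0" "l \<noteq> 0"
  shows "critical_values (rescale_poly a l b p) \<subseteq> (\<lambda>v. a * v + b) ` critical_values p"
proof
  fix v' assume "v' \<in> critical_values (rescale_poly a l b p)"
  then obtain z where z: "poly (pderiv (rescale_poly a l b p)) z = 0" "v' = poly (rescale_poly a l b p) z"
    by (auto simp: critical_values_def)
  have "poly (pderiv p) (l * z) = 0"
    using z(1) assms by (simp add: rescale_poly_def pderiv_add pderiv_smult pderiv_pcompose pderiv_pCons poly_pcompose mult_ac)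
  moreover have "v' = a * poly p (l * z) + b"
    using z(2) by (simp add: rescale_poly_def poly_pcompose mult_ac)
  ultimately show "v' \<in> (\<lambda>v. a * v + b) ` critical_values p"
    by (auto simp: critical_values_def)
qed

lemma rescale_poly_centered_monic:
  assumes "p \<in> centered_monic d" "2 \<le> d" "a * l ^ d = 1"
  shows "rescale_poly a l b p \<in> centered_monic d"
  using centered_monicD[OF assms(1)] assms(2,3) coeff_eq_0[of p]
  by (intro centered_monicI) (auto simp: coeff_rescale_poly)

definition normalized_centered :: "nat \<Rightarrow> complex poly set" where
  "normalized_centered d = {p \<in> centered_monic d. coeff p 0 = 0 \<and> (\<forall>k<d - 1. cmod (coeff p k) \<le> 1) \<and>
      (\<exists>k\<in>{1..<d - 1}. cmod (coeff p k) = 1)}"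

lemma compactin_normalized_centered: "compactin (Poly_mt_top d) (normalized_centered d)"
proof (cases "d \<le> 2")
  case True
  have "normalized_centered d = {}"
  proof (intro equalityI subsetI)
    fix p assume "p \<in> normalized_centered d"
    then obtain k where "k \<in> {1..<d - 1}"
      unfolding normalized_centered_def by blast
    then show "p \<in> {}" using True by simp
  qed simp
  then show ?thesis
    by (simp only: compactin_empty)
next
  case False
  define Z where "Z = {p \<in> topspace (Poly_mt_top d). coeff p 0 \<in> {0}}"
  define S where "S k = {p \<in> topspace (Poly_mt_top d). coeff p k \<in> sphere 0 1}" for k
  have "closedin (Poly_mt_top d) Z"
    unfolding Z_def using False
    by (intro closedin_continuous_map_preimage[OF continuous_map_coeff]) (auto simp: closed_closedin[symmetric])
  moreover have "closedin (Poly_mt_top d) (S k)" if "k < d - 1" for k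
    unfolding S_def using that
    by (intro closedin_continuous_map_preimage[OF continuous_map_coeff]) (auto simp: closed_closedin[symmetric])
  ultimately have "compactin (Poly_mt_top d)
      ((Z \<inter> \<Union>(S ` {1..<d - 1})) \<inter> {p \<in> centered_monic d. \<forall>k<d - 1. cmod (coeff p k) \<le> 1})"
    by (intro closed_Int_compactin closedin_Int closedin_Union compactin_Poly_mt_top_coeff_bounded) auto
  moreover have "(Z \<inter> \<Union>(S ` {1..<d - 1})) \<inter> {p \<in> centered_monic d. \<forall>k<d - 1. cmod (coeff p k) \<le> 1}
      = normalized_centered d"
    by (auto simp: Z_def S_def normalized_centered_def topspace_Poly_mt_top)
  ultimately show ?thesis by simp
qed

lemma normalized_centered_two_critical_values:
  assumes "p \<in> normalized_centered d"
  shows "\<exists>v1\<in>critical_values p. \<exists>v2\<in>critical_values p. v1 \<noteq> v2"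
proof (rule ccontr)
  assume "\<not> ?thesis"
  moreover obtain k where "1 \<le> k" "k < d - 1" "cmod (coeff p k) = 1"
    using assms by (auto simp: normalized_centered_def)
  moreover have "p \<in> centered_monic d"
    using assms by (simp add: normalized_centered_def)
  ultimately show False
    using single_critical_value_imp_coeff_eq_0[of p d k] by auto
qed

lemma power_scale_exists:
  fixes c :: "nat \<Rightarrow> real"
  assumes "finite J" "\<And>j. j \<in> J \<Longrightarrow> j < d" "\<And>j. 0 \<le> c j"
  obtains N where "0 \<le> N" "\<And>j. j \<in> J \<Longrightarrow> c j \<le> N ^ (d - j)" "N = 0 \<or> (\<exists>j\<in>J. c j = N ^ (d - j))"
proof -
  define rt where "rt j = root (d - j) (c j)" for j
  define N where "N = Max (insert 0 (rt ` J))"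
  have rt_pow: "rt j ^ (d - j) = c j" if "j \<in> J" for j
    using assms(2)[OF that] assms(3) unfolding rt_def by (intro real_root_pow_pos2) auto
  have rt_le: "rt j \<le> N" if "j \<in> J" for j
    using assms(1) that by (auto simp: N_def)
  have "0 \<le> N"
    using assms(1) by (auto simp: N_def)
  moreover have "c j \<le> N ^ (d - j)" if "j \<in> J" for j
    using rt_pow[OF that] power_mono[OF rt_le[OF that], of "d - j"] assms(3)
    by (simp add: rt_def real_root_ge_zero)
  moreover have "N \<in> insert 0 (rt ` J)"
    unfolding N_def using assms(1) by (intro Max_in) auto
  then have "N = 0 \<or> (\<exists>j\<in>J. c j = N ^ (d - j))"
    using rt_pow by force
  ultimately show thesis using that by blast
qed

lemma norm_coeff_rescale_poly:
  assumes "0 < N" "j \<le> d" "0 < j"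
  shows "cmod (coeff (rescale_poly (1 / of_real N ^ d) (of_real N) b p) j) = cmod (coeff p j) / N ^ (d - j)"
proof -
  have "N ^ d = N ^ j * N ^ (d - j)"
    using assms(2) by (simp flip: power_add)
  then show ?thesis
    using assms by (simp add: coeff_rescale_poly norm_mult norm_divide norm_power field_simps)
qed

lemma rescale_poly_normalized_centered:
  assumes p: "p \<in> centered_monic d" "2 \<le> d" and N: "0 < N"
    and le: "\<And>j. 1 \<le> j \<Longrightarrow> j < d - 1 \<Longrightarrow> cmod (coeff p j) \<le> N ^ (d - j)"
    and k0: "1 \<le> k0" "k0 < d - 1" "cmod (coeff p k0) = N ^ (d - k0)"
  shows "rescale_poly (1 / of_real N ^ d) (of_real N) (- coeff p 0 / of_real N ^ d) p \<in> normalized_centered d"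
    (is "?q \<in> _")
proof -
  have "?q \<in> centered_monic d"
    using N by (intro rescale_poly_centered_monic[OF p]) auto
  moreover have "coeff ?q 0 = 0"
    by (simp add: coeff_rescale_poly)
  moreover have "cmod (coeff ?q j) \<le> 1" if "j < d - 1" for j
    using \<open>coeff ?q 0 = 0\<close> norm_coeff_rescale_poly[OF N, of j d] le[of j] N that
    by (cases "j = 0") (auto simp: divide_le_eq)
  moreover have "cmod (coeff ?q k0) = 1"
    using norm_coeff_rescale_poly[OF N, of k0 d] k0 N by simp
  ultimately show ?thesis
    using k0 unfolding normalized_centered_def by auto
qed

lemma middle_coeff_le:
  assumes p: "p \<in> centered_monic d" "2 \<le> d" and crit: "critical_values p \<subseteq> cball 0 M"
    and m: "0 < m" "\<And>q. q \<in> normalized_centered d \<Longrightarrow> \<exists>v1\<in>critical_values q. \<exists>v2\<in>critical_values q. m \<le> dist v1 v2"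
    and k: "1 \<le> k" "k < d - 1"
  shows "cmod (coeff p k) \<le> max 1 (2 * M / m)"
proof -
  obtain N where N: "0 \<le> N" "\<And>j. j \<in> {1..<d - 1} \<Longrightarrow> cmod (coeff p j) \<le> N ^ (d - j)"
    and attained: "N = 0 \<or> (\<exists>j\<in>{1..<d - 1}. cmod (coeff p j) = N ^ (d - j))"
    by (rule power_scale_exists[of "{1..<d - 1}" d "\<lambda>j. cmod (coeff p j)"]) auto
  have ck: "cmod (coeff p k) \<le> N ^ (d - k)"
    using N(2) k by simp
  show ?thesis
  proof (cases "N = 0")
    case True
    then have "cmod (coeff p k) \<le> 0"
      using ck k by (simp add: power_0_left split: if_splits)
    then show ?thesis by linarith
  next
    case False
    then have "0 < N" using N(1) by simp
    then obtain k0 where k0: "1 \<le> k0" "k0 < d - 1" "cmod (coeff p k0) = N ^ (d - k0)"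
      using attained by auto
    define a b where "a = 1 / complex_of_real N ^ d" and "b = - coeff p 0 / complex_of_real N ^ d"
    have "rescale_poly a (of_real N) b p \<in> normalized_centered d"
      unfolding a_def b_def using N(2) k0 \<open>0 < N\<close> by (intro rescale_poly_normalized_centered[OF p]) auto
    then obtain v1' v2' where v': "v1' \<in> critical_values (rescale_poly a (of_real N) b p)"
      "v2' \<in> critical_values (rescale_poly a (of_real N) b p)" "m \<le> dist v1' v2'"
      using m(2) by blast
    obtain v1 v2 where v: "v1 \<in> critical_values p" "v2 \<in> critical_values p"
      "v1' = a * v1 + b" "v2' = a * v2 + b"
    proof -
      have "critical_values (rescale_poly a (of_real N) b p) \<subseteq> (\<lambda>v. a * v + b) ` critical_values p"
        using \<open>0 < N\<close> by (intro critical_values_rescale_poly) (auto simp: a_def)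
      then show thesis
        using v' that by blast
    qed
    have "v1' - v2' = (v1 - v2) / complex_of_real N ^ d"
      by (simp add: v a_def diff_divide_distrib)
    then have "dist v1' v2' = cmod (v1 - v2) / N ^ d"
      using \<open>0 < N\<close> by (simp add: dist_norm norm_divide norm_power)
    also have "cmod (v1 - v2) \<le> 2 * M"
    proof -
      have "cmod v1 \<le> M" "cmod v2 \<le> M"
        using crit v(1,2) by auto
      then show ?thesis
        using norm_triangle_ineq4[of v1 v2] by linarith
    qed
    finally have "m \<le> 2 * M / N ^ d"
      using v'(3) \<open>0 < N\<close> by (simp add: divide_right_mono)
    then have "N ^ d \<le> 2 * M / m"
      using m(1) \<open>0 < N\<close> by (simp add: field_simps)
    moreover have "N ^ (d - k) \<le> max 1 (N ^ d)"
      by (cases "N \<le> 1") (auto simp: N(1) power_le_one intro: power_increasing)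
    ultimately show ?thesis
      using ck by (meson max.mono order.refl order_trans)
  qed
qed

lemma coeff_0_le:
  assumes p: "p \<in> centered_monic d" "2 \<le> d"
    and C: "1 \<le> C" "\<And>k. 1 \<le> k \<Longrightarrow> k < d - 1 \<Longrightarrow> cmod (coeff p k) \<le> C"
    and crit: "critical_values p \<subseteq> cball 0 M"
  shows "cmod (coeff p 0) \<le> M + C * (\<Sum>i<d + 1. (1 + real (d + 1) * C) ^ i)"
proof -
  define r where "r = p - [:coeff p 0:]"
  define W where "W = 1 + real (d + 1) * C"
  note p_facts = centered_monicD[OF p(1)]
  have r_zero: "coeff r k = 0" if "d + 1 \<le> k" for k
    using that coeff_eq_0[of p k] p_facts by (auto simp: r_def coeff_pCons split: nat.split)
  have r_le: "cmod (coeff r k) \<le> C" for k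
  proof -
    have "k = 0 \<or> (1 \<le> k \<and> k < d - 1) \<or> k = d - 1 \<or> k = d \<or> d < k" by linarith
    then show ?thesis
      using C p_facts coeff_eq_0[of p k] by (auto simp: r_def coeff_pCons split: nat.split)
  qed
  have pderiv_r: "pderiv r = pderiv p"
    by (simp add: r_def pderiv_diff pderiv_pCons)
  obtain w where w: "poly (pderiv p) w = 0"
    using critical_point_exists[OF p] by blast
  note p' = centered_monic_pderiv[OF p(1)]
  have "(\<Sum>i<d - 1. cmod (coeff (pderiv p) i)) \<le> (\<Sum>i<d - 1. real (d + 1) * C)"
    using coeff_pderiv_bound(2)[where N = "d + 1", OF r_zero r_le] by (intro sum_mono) (simp add: pderiv_r)
  also have "\<dots> \<le> real d * (real (d + 1) * C)"
    using C(1) by (simp add: mult_right_mono)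
  finally have "(\<Sum>i<d - 1. cmod (coeff (pderiv p) i)) / real d \<le> real (d + 1) * C"
    using p(2) by (simp add: pos_divide_le_eq mult.commute)
  moreover have "cmod w \<le> 1 + (\<Sum>i<d - 1. cmod (coeff (pderiv p) i)) / real d"
    using norm_root_le_Cauchy_bound[OF p'(3) w] p' by simp
  ultimately have "cmod w \<le> W"
    unfolding W_def by linarith
  then have "cmod (poly r w) \<le> C * (\<Sum>i<d + 1. W ^ i)"
    by (intro norm_poly_le_coeff_bound r_zero r_le)
  moreover have "cmod (poly p w) \<le> M"
    using crit w by (auto simp: critical_values_def)
  moreover have "coeff p 0 = poly p w - poly r w"
    by (simp add: r_def)
  ultimately show ?thesis
    using norm_triangle_ineq4[of "poly p w" "poly r w"] by (simp add: W_def)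
qed

lemma Poly_mt_coeffs_bounded:
  assumes "K \<subseteq> cball 0 M"
  obtains R where "\<And>p k. p \<in> Poly_mt d K \<Longrightarrow> k < d - 1 \<Longrightarrow> cmod (coeff p k) \<le> R"
proof (cases "2 \<le> d")
  case True
  obtain m where m: "0 < m"
    "\<And>q. q \<in> normalized_centered d \<Longrightarrow> \<exists>v1\<in>critical_values q. \<exists>v2\<in>critical_values q. m \<le> dist v1 v2"
    using compactin_uniform_critical_spread[OF compactin_normalized_centered[of d]
        normalized_centered_two_critical_values[of _ d]] by blast
  define C where "C = max 1 (2 * M / m)"
  show thesis
  proof (rule that)
    fix p k assume p: "p \<in> Poly_mt d K" and k: "k < d - 1"
    then have pc: "p \<in> centered_monic d" and crit: "critical_values p \<subseteq> cball 0 M"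
      using assms by (auto simp: Poly_mt_def)
    have mid: "cmod (coeff p j) \<le> C" if "1 \<le> j" "j < d - 1" for j
      unfolding C_def using middle_coeff_le[of p d M m j] pc True crit m that by blast
    show "cmod (coeff p k) \<le> max C (M + C * (\<Sum>i<d + 1. (1 + real (d + 1) * C) ^ i))"
    proof (cases "k = 0")
      case True
      then show ?thesis
        using coeff_0_le[OF pc \<open>2 \<le> d\<close> _ mid crit] by (simp add: C_def)
    next
      case False
      then show ?thesis using mid[of k] k by simp
    qed
  qed
next
  case False
  then show thesis
    by (intro that[of 0]) simp
qed

lemma compactin_Poly_mt:
  assumes "compact K"
  shows "compactin (Poly_mt_top d) (Poly_mt d K)"
proof -
  obtain M where "\<forall>x\<in>K. norm x \<le> M"
    using compact_imp_bounded[OF assms] unfolding bounded_pos by blast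
  then have "K \<subseteq> cball 0 M"
    by (auto simp: mem_cball_0)
  then obtain R where "\<And>p k. p \<in> Poly_mt d K \<Longrightarrow> k < d - 1 \<Longrightarrow> cmod (coeff p k) \<le> R"
    by (rule Poly_mt_coeffs_bounded[where d = d]) blast
  then have "Poly_mt d K \<subseteq> {p \<in> centered_monic d. \<forall>k<d - 1. cmod (coeff p k) \<le> R}"
    by (auto simp: Poly_mt_def)
  then show ?thesis
    by (rule closed_compactin[OF compactin_Poly_mt_top_coeff_bounded _ closedin_Poly_mt[OF compact_imp_closed[OF assms]]])
qed

section \<open>Density of polynomials with critical values in the open set\<close>

lemma closure_of_Poly_mt_subset:
  assumes "closed K" "U \<subseteq> K"
  shows "Poly_mt_top d closure_of Poly_mt d U \<subseteq> Poly_mt d K"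
  using assms by (intro closure_of_minimal closedin_Poly_mt) (auto simp: Poly_mt_def)

lemma Poly_mt_subset_closure_of_if_contracts_into:
  assumes "contracts_into c K U"
  shows "Poly_mt d K \<subseteq> Poly_mt_top d closure_of Poly_mt d U"
proof
  fix p assume "p \<in> Poly_mt d K"
  then have p: "p \<in> centered_monic d" and crit: "critical_values p \<subseteq> K"
    by (auto simp: Poly_mt_def)
  show "p \<in> Poly_mt_top d closure_of Poly_mt d U"
  proof (cases "critical_values p = {}")
    case True
    then show ?thesis
      using p closure_of_subset_Int[of "Poly_mt_top d" "Poly_mt d U"]
      by (auto simp: Poly_mt_def topspace_Poly_mt_top)
  next
    case False
    then have d: "2 \<le> d"
      using two_le_if_critical_point[OF p] by (auto simp: critical_values_def)
    define Q where "Q s = rescale_poly (of_real s) (of_real (s powr (-1 / d))) (of_real (1 - s) * c) p"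
      for s :: real
    have Q_in: "Q s \<in> Poly_mt d U" if "0 < s" "s < 1" for s
    proof -
      have "s * (s powr (-1 / d)) ^ d = 1"
        using that d by (simp add: powr_realpow[symmetric] powr_powr powr_add[symmetric] flip: powr_mult_base)
      then have "Q s \<in> centered_monic d"
        unfolding Q_def by (intro rescale_poly_centered_monic[OF p d]) (metis of_real_1 of_real_mult of_real_power)
      moreover have "critical_values (Q s) \<subseteq> (\<lambda>v. of_real s * v + of_real (1 - s) * c) ` critical_values p"
        unfolding Q_def using that by (intro critical_values_rescale_poly) auto
      moreover have "of_real s * v + of_real (1 - s) * c = c + of_real s * (v - c)" for v
        by (simp add: algebra_simps)
      ultimately show ?thesis
        using assms crit that unfolding contracts_into_def Poly_mt_def by auto
    qed
    have "limitin (Poly_mt_top d) Q p (at_left 1)"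
    proof (rule limitin_Poly_mt_topI[OF p])
      show "\<forall>\<^sub>F s in at_left 1. Q s \<in> centered_monic d"
        using eventually_at_left_real[of 0 "1::real"] Q_in by (auto simp: Poly_mt_def elim: eventually_mono)
      fix k
      show "((\<lambda>s. coeff (Q s) k) \<longlongrightarrow> coeff p k) (at_left 1)"
        unfolding Q_def coeff_rescale_poly by (cases "k = 0") (auto intro!: tendsto_eq_intros)
    qed
    moreover have "\<forall>\<^sub>F s in at_left 1. Q s \<in> Poly_mt d U"
      using eventually_at_left_real[of 0 "1::real"] Q_in by (auto elim: eventually_mono)
    ultimately show ?thesis
      by (rule in_closure_of_if_limitin) simp
  qed
qed

lemma critical_points_perturbed_bounded:
  assumes p: "p \<in> centered_monic d" and h: "\<And>k. d - 1 \<le> k \<Longrightarrow> coeff h k = 0"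
  obtains B where "\<And>t w. 0 \<le> t \<Longrightarrow> t \<le> 1 \<Longrightarrow> poly (pderiv (p + smult (of_real t) h)) w = 0 \<Longrightarrow> cmod w \<le> B"
proof
  fix t :: real and w
  assume t: "0 \<le> t" "t \<le> 1" and w: "poly (pderiv (p + smult (of_real t) h)) w = 0"
  have "p + smult (of_real t) h \<in> centered_monic d"
    using h by (intro centered_monic_add[OF p]) simp
  note q' = centered_monic_pderiv[OF this]
  have "cmod (coeff (pderiv (p + smult (of_real t) h)) i) \<le> cmod (coeff (pderiv p) i) + cmod (coeff (pderiv h) i)" for i
  proof -
    have "t * cmod (coeff (pderiv h) i) \<le> cmod (coeff (pderiv h) i)"
      using t by (simp add: mult_left_le_one_le)
    then show ?thesis
      using t norm_triangle_ineq[of "coeff (pderiv p) i" "of_real t * coeff (pderiv h) i"]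
      by (simp add: pderiv_add pderiv_smult norm_mult)
  qed
  then have "(\<Sum>i<d - 1. cmod (coeff (pderiv (p + smult (of_real t) h)) i)) / real d
      \<le> (\<Sum>i<d - 1. cmod (coeff (pderiv p) i) + cmod (coeff (pderiv h) i)) / real d"
    by (intro divide_right_mono sum_mono) auto
  then show "cmod w \<le> 1 + (\<Sum>i<d - 1. cmod (coeff (pderiv p) i) + cmod (coeff (pderiv h) i)) / real d"
    using norm_root_le_Cauchy_bound[OF q'(3) w] q'(1,2) by simp
qed

lemma perturbed_critical_value_near:
  fixes p h :: "complex poly"
  assumes p: "p \<in> centered_monic d" and t: "0 < t"
    and w': "poly (pderiv (p + smult (of_real t) h)) w' = 0"
    and h': "cmod (poly (pderiv h) w') \<le> H"
    and \<rho>: "0 < \<rho>" "t * H < real d * \<rho> ^ (d - 1)" "2 ^ (d - 1) * H * \<rho> \<le> \<kappa> / 2"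
    and h_cont: "\<And>w z. poly (pderiv p) w = 0 \<Longrightarrow> cmod (z - w) < \<rho> \<Longrightarrow> cmod (poly h z - poly h w) < \<kappa> / 2"
    and interp: "\<And>w. poly (pderiv p) w = 0 \<Longrightarrow> poly h w = \<delta> (poly p w)"
  shows "\<exists>v\<in>critical_values p. cmod (poly (p + smult (of_real t) h) w' - (v + of_real t * \<delta> v)) < \<kappa> * t"
proof -
  \<comment> \<open>\<open>p'(w') = -t h'(w')\<close> is small, so the critical point \<open>w\<close> of \<open>p\<close> nearest to \<open>w'\<close> is close;
    then \<open>p(w') - p(w)\<close> is of order \<open>t \<rho>\<close> and \<open>h(w') \<approx> h(w) = \<delta>(p(w))\<close>.\<close>
  note p' = centered_monic_pderiv[OF p]
  define R where "R = {w. poly (pderiv p) w = 0}"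
  have "poly (pderiv p) w' = - (of_real t * poly (pderiv h) w')"
    using w' by (simp add: pderiv_add pderiv_smult eq_neg_iff_add_eq_0)
  then have p'_w': "cmod (poly (pderiv p) w') \<le> t * H"
    using t h' by (simp add: norm_mult mult_left_mono)
  also have "\<dots> < cmod (lead_coeff (pderiv p)) * \<rho> ^ degree (pderiv p)"
    using \<rho>(2) p' by simp
  finally obtain w0 where "w0 \<in> R" "cmod (w' - w0) < \<rho>"
    using poly_root_near[OF p'(3) \<rho>(1)] by (auto simp: R_def)
  define w where "w = arg_min_on (\<lambda>x. cmod (w' - x)) R"
  have "finite R" using poly_roots_finite[OF p'(3)] by (simp add: R_def)
  then have w: "w \<in> R" "\<And>x. x \<in> R \<Longrightarrow> cmod (w' - w) \<le> cmod (w' - x)"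
    using arg_min_if_finite[of R "\<lambda>x. cmod (w' - x)"] \<open>w0 \<in> R\<close> unfolding w_def by (auto simp: not_less)
  have "cmod (w' - w) < \<rho>"
    using w(2)[OF \<open>w0 \<in> R\<close>] \<open>cmod (w' - w0) < \<rho>\<close> by simp
  have "cmod (poly p w' - poly p w) \<le> 2 ^ degree (pderiv p) * cmod (poly (pderiv p) w') * cmod (w' - w)"
    using w(2) by (intro norm_poly_diff_le_nearest_critical_point) (simp add: R_def)
  also have "\<dots> \<le> 2 ^ (d - 1) * (t * H) * \<rho>"
    using p'_w' \<open>cmod (w' - w) < \<rho>\<close> p'(1) order_trans[OF norm_ge_zero p'_w']
    by (intro mult_mono) auto
  also have "\<dots> \<le> t * (\<kappa> / 2)"
    using \<rho>(3) t by (simp add: mult.left_commute mult.assoc mult_left_mono)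
  finally have "cmod (poly p w' - poly p w) \<le> t * (\<kappa> / 2)" .
  moreover have "cmod (poly h w' - poly h w) < \<kappa> / 2"
    using h_cont w(1) \<open>cmod (w' - w) < \<rho>\<close> by (simp add: R_def)
  moreover have "poly h w = \<delta> (poly p w)"
    using interp w(1) by (simp add: R_def)
  ultimately have "cmod (poly (p + smult (of_real t) h) w' - (poly p w + of_real t * \<delta> (poly p w)))
      = cmod ((poly p w' - poly p w) + of_real t * (poly h w' - poly h w))"
    by (simp add: algebra_simps)
  also have "\<dots> \<le> cmod (poly p w' - poly p w) + t * cmod (poly h w' - poly h w)"
    using t norm_triangle_ineq[of "poly p w' - poly p w" "of_real t * (poly h w' - poly h w)"]
    by (simp add: norm_mult)
  also have "\<dots> < t * (\<kappa> / 2) + t * (\<kappa> / 2)"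
    using t \<open>cmod (poly p w' - poly p w) \<le> t * (\<kappa> / 2)\<close> \<open>cmod (poly h w' - poly h w) < \<kappa> / 2\<close>
    by (intro add_le_less_mono mult_strict_left_mono) auto
  finally have "cmod (poly (p + smult (of_real t) h) w' - (poly p w + of_real t * \<delta> (poly p w))) < \<kappa> * t"
    by (simp add: field_simps)
  moreover have "poly p w \<in> critical_values p"
    using w(1) by (auto simp: R_def critical_values_def)
  ultimately show ?thesis by blast
qed

lemma eventually_critical_values_perturbed:
  fixes p h :: "complex poly"
  assumes p: "p \<in> centered_monic d" and \<kappa>: "0 < \<kappa>" and h: "\<And>k. d - 1 \<le> k \<Longrightarrow> coeff h k = 0"
    and interp: "\<And>w. poly (pderiv p) w = 0 \<Longrightarrow> poly h w = \<delta> (poly p w)"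
  shows "\<forall>\<^sub>F t in at_right 0. \<forall>v'\<in>critical_values (p + smult (of_real t) h).
           \<exists>v\<in>critical_values p. cmod (v' - (v + of_real t * \<delta> v)) < \<kappa> * t"
proof -
  define R where "R = {w. poly (pderiv p) w = 0}"
  have "finite R"
    using poly_roots_finite[OF centered_monic_pderiv(3)[OF p]] by (simp add: R_def)
  obtain B where B: "\<And>t w. 0 \<le> t \<Longrightarrow> t \<le> 1 \<Longrightarrow> poly (pderiv (p + smult (of_real t) h)) w = 0 \<Longrightarrow> cmod w \<le> B"
    using critical_points_perturbed_bounded[OF p h] by blast
  obtain H where H: "0 < H" "\<And>z. cmod z \<le> B \<Longrightarrow> cmod (poly (pderiv h) z) \<le> H"
    using poly_bound_exists[of B "pderiv h"] by blast
  have "\<forall>\<^sub>F \<rho> in at_right 0. \<forall>z. cmod (z - w) < \<rho> \<longrightarrow> cmod (poly h z - poly h w) < \<kappa> / 2" for w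
  proof -
    have "continuous (at w) (poly h)" by simp
    then obtain \<rho>0 where "0 < \<rho>0" "\<And>z. dist z w < \<rho>0 \<Longrightarrow> dist (poly h z) (poly h w) < \<kappa> / 2"
      using \<kappa> unfolding continuous_at_eps_delta by (meson half_gt_zero)
    then show ?thesis
      using eventually_at_right_real[OF \<open>0 < \<rho>0\<close>] by (auto simp: dist_norm elim!: eventually_mono)
  qed
  then have "\<forall>\<^sub>F \<rho> in at_right 0. \<forall>w\<in>R. \<forall>z. cmod (z - w) < \<rho> \<longrightarrow> cmod (poly h z - poly h w) < \<kappa> / 2"
    using \<open>finite R\<close> by (simp add: eventually_ball_finite)
  moreover have "\<forall>\<^sub>F \<rho> in at_right 0. \<rho> * (2 ^ (d - 1) * H) < \<kappa> / 2"
    using \<kappa> by (simp only: eventually_mult_less_at_right_0 half_gt_zero)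
  ultimately have "\<forall>\<^sub>F \<rho> in at_right 0. 0 < \<rho> \<and> \<rho> * (2 ^ (d - 1) * H) < \<kappa> / 2 \<and>
      (\<forall>w\<in>R. \<forall>z. cmod (z - w) < \<rho> \<longrightarrow> cmod (poly h z - poly h w) < \<kappa> / 2)"
    using eventually_at_right_less[of 0] by eventually_elim auto
  then obtain \<rho> where \<rho>: "0 < \<rho>" "\<rho> * (2 ^ (d - 1) * H) < \<kappa> / 2"
    "\<And>w z. w \<in> R \<Longrightarrow> cmod (z - w) < \<rho> \<Longrightarrow> cmod (poly h z - poly h w) < \<kappa> / 2"
    using eventually_happens'[OF trivial_limit_at_right_real] by blast
  have "\<forall>\<^sub>F t in at_right 0. t * H < real d * \<rho> ^ (d - 1)"
    using \<rho>(1) centered_monicD(4)[OF p] by (intro eventually_mult_less_at_right_0) simp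
  with eventually_at_right_real[OF zero_less_one]
  show ?thesis
  proof eventually_elim
    case (elim t)
    show ?case
    proof
      fix v' assume "v' \<in> critical_values (p + smult (of_real t) h)"
      then obtain w' where w': "poly (pderiv (p + smult (of_real t) h)) w' = 0"
        "v' = poly (p + smult (of_real t) h) w'"
        by (auto simp: critical_values_def)
      have "cmod (poly (pderiv h) w') \<le> H"
        using elim B[OF _ _ w'(1)] by (intro H(2)) auto
      then show "\<exists>v\<in>critical_values p. cmod (v' - (v + of_real t * \<delta> v)) < \<kappa> * t"
        unfolding w'(2) using elim \<rho> interp
        by (intro perturbed_critical_value_near[OF p _ w'(1)]) (auto simp: R_def mult_ac)
    qed
  qed
qed

lemma interpolant_at_critical_points:
  assumes p: "p \<in> centered_monic d"
  obtains h where "\<And>k. d - 1 \<le> k \<Longrightarrow> coeff h k = 0"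
    "\<And>w. poly (pderiv p) w = 0 \<Longrightarrow> poly h w = f (poly p w)"
proof -
  note p' = centered_monic_pderiv[OF p]
  define R where "R = {w. poly (pderiv p) w = 0}"
  have "finite R" "card R \<le> d - 1"
    using poly_roots_finite[OF p'(3)] card_poly_roots_bound[OF p'(3)] p'(1) by (simp_all add: R_def)
  obtain h where h: "\<And>k. card R \<le> k \<Longrightarrow> coeff h k = 0" "\<And>w. w \<in> R \<Longrightarrow> poly h w = f (poly p w)"
    using lagrange_interpolation[OF \<open>finite R\<close>, of "\<lambda>w. f (poly p w)"] by blast
  show thesis
  proof (rule that)
    show "coeff h k = 0" if "d - 1 \<le> k" for k
      using h(1) \<open>card R \<le> d - 1\<close> that by simp
  qed (simp add: h(2) R_def)
qed

lemma Poly_mt_subset_closure_of_if_pushes_into: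
  assumes "pushes_into \<delta> \<kappa> K U"
  shows "Poly_mt d K \<subseteq> Poly_mt_top d closure_of Poly_mt d U"
proof
  fix p assume "p \<in> Poly_mt d K"
  then have p: "p \<in> centered_monic d" and crit: "critical_values p \<subseteq> K"
    by (auto simp: Poly_mt_def)
  obtain h where h: "\<And>k. d - 1 \<le> k \<Longrightarrow> coeff h k = 0"
    and interp: "\<And>w. poly (pderiv p) w = 0 \<Longrightarrow> poly h w = \<delta> (poly p w)"
    using interpolant_at_critical_points[OF p] by blast
  define Q where "Q t = p + smult (of_real t) h" for t :: real
  have Q_cm: "Q t \<in> centered_monic d" for t
    unfolding Q_def using h by (intro centered_monic_add[OF p]) simp
  have "0 < \<kappa>"
    using assms by (simp add: pushes_into_def)
  have "\<forall>\<^sub>F t in at_right 0. \<forall>v'\<in>critical_values (p + smult (of_real t) h).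
      \<exists>v\<in>critical_values p. cmod (v' - (v + of_real t * \<delta> v)) < \<kappa> * t"
    by (rule eventually_critical_values_perturbed[OF p \<open>0 < \<kappa>\<close>]) (use h interp in auto)
  with eventually_at_right_real[OF zero_less_one]
  have "\<forall>\<^sub>F t in at_right 0. Q t \<in> Poly_mt d U"
  proof eventually_elim
    case (elim t)
    have "v' \<in> U" if v': "v' \<in> critical_values (Q t)" for v'
    proof -
      obtain v where v: "v \<in> critical_values p" "cmod (v' - (v + of_real t * \<delta> v)) < \<kappa> * t"
        using elim v' by (auto simp: Q_def)
      then have "v' \<in> ball (v + of_real t * \<delta> v) (\<kappa> * t)"
        by (simp add: dist_norm norm_minus_commute)
      moreover have "v \<in> K" using crit v(1) by blast
      ultimately show "v' \<in> U"
        using assms elim unfolding pushes_into_def by force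
    qed
    then show ?case
      using Q_cm by (auto simp: Poly_mt_def)
  qed
  have "limitin (Poly_mt_top d) Q p (at_right 0)"
  proof (rule limitin_Poly_mt_topI[OF p])
    show "\<forall>\<^sub>F t in at_right 0. Q t \<in> centered_monic d"
      using Q_cm by simp
    fix k
    show "((\<lambda>t. coeff (Q t) k) \<longlongrightarrow> coeff p k) (at_right 0)"
      unfolding Q_def by (auto intro!: tendsto_eq_intros)
  qed
  then show "p \<in> Poly_mt_top d closure_of Poly_mt d U"
    using \<open>\<forall>\<^sub>F t in at_right 0. Q t \<in> Poly_mt d U\<close> by (rule in_closure_of_if_limitin) simp
qed

lemma shape_pair_closures:
  assumes "shape_pair K U"
  shows "compact K" "closure U = K" "Poly_mt_top d closure_of Poly_mt d U = Poly_mt d K"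
proof -
  have "compact K \<and> U \<subseteq> K \<and> closure U = K \<and> Poly_mt d K \<subseteq> Poly_mt_top d closure_of Poly_mt d U"
    using assms
  proof (rule shape_pairE)
    fix c assume K: "compact K" "U \<subseteq> K" "contracts_into c K U"
    then show ?thesis
      using closure_eq_if_contracts_into[OF compact_imp_closed[OF K(1)] K(2,3)]
        Poly_mt_subset_closure_of_if_contracts_into[OF K(3)] by simp
  next
    fix \<delta> \<kappa> assume K: "compact K" "U \<subseteq> K" "pushes_into \<delta> \<kappa> K U"
    then show ?thesis
      using closure_eq_if_pushes_into[OF compact_imp_closed[OF K(1)] K(2,3)]
        Poly_mt_subset_closure_of_if_pushes_into[OF K(3)] by simp
  qed
  then show "compact K" "closure U = K" "Poly_mt_top d closure_of Poly_mt d U = Poly_mt d K"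
    using closure_of_Poly_mt_subset[OF compact_imp_closed, of K U d] by auto
qed

theorem proposition10p8:
  fixes Ubar U :: "complex set" and d n :: nat
  assumes "shape_pair Ubar U"
    and "1 \<le> d" and "n = d - 1"
  shows "Cn_top n closure_of (PiE {..<n} (\<lambda>_. U)) = PiE {..<n} (\<lambda>_. Ubar)
       \<and> compactin (Cn_top n) (PiE {..<n} (\<lambda>_. Ubar))
       \<and> Mult_top n closure_of (Mult n U) = Mult n Ubar
       \<and> compactin (Mult_top n) (Mult n Ubar)
       \<and> Poly_mt_top d closure_of (Poly_mt d U) = Poly_mt d Ubar
       \<and> compactin (Poly_mt_top d) (Poly_mt d Ubar)"
  using shape_pair_closures[OF assms(1)] closure_of_Cn_top_PiE closure_of_Mult
    compactin_Cn_top_PiE compactin_Mult compactin_Poly_mt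
  by simp

end
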